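(* Let $G = N \rtimes H$ with $N,H$ finite abelian, let $\mathcal{O}_\alpha$ be an $H$-orbit in $P_N$ with stabilizer $H_\alpha$ and $c_\alpha = |\mathcal{O}_\alpha| = [H:H_\alpha]$, and let $u_p$ be an element of the idempotent eigenbasis of $\mathbb{C}[H_\alpha]$. Fix $v_1 \in \mathcal{O}_\alpha$, choose representatives $h_1,\dots,h_{c_\alpha}$ of the cosets of $H_\alpha$ in $H$, put $v_i = h_iv_1h_i^{-1}$ (so $\mathcal{O}_\alpha = \{v_1,\dots,v_{c_\alpha}\}$), $w_i = v_iu_p$, and $e_{ij} = w_i h_ih_j^{-1} w_j$. Then $e_{ij}e_{jk} = e_{ik}$, $e_{ij}e_{kl}=0$ for $j\ne k$, and $e_{ij}\mapsto E_{ij}$ defines an algebra isomorphism of the block $A = \mathbb{C}[G]J^{[\alpha]}_p$, where $J^{[\alpha]}_p = \sum_{i=1}^{c_\alpha} w_i$, with $\mathbb{M}_{c_\alpha}(\mathbb{C})$.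
   Context: $N$ is normal in $G$, $H$ acts on $N$ by conjugation. For a finite abelian group $K$, the idempotent eigenbasis of $\mathbb{C}[K]$ is the unique basis of $\mathbb{C}[K]$ consisting of simultaneous eigenvectors of left multiplication by elements of $\mathbb{C}[K]$ and consisting of pairwise orthogonal idempotents. $P_N$ is the idempotent eigenbasis of $\mathbb{C}[N]$, permuted by conjugation by $H$; $H_\alpha$ is the common stabilizer of the elements of $\mathcal{O}_\alpha$. $E_{ij}$ is the elementary $c_\alpha\times c_\alpha$ matrix with $1$ in position $(i,j)$. *)

theory Defs
  imports "HOL-Algebra.Coset" "Jordan_Normal_Form.Matrix"
begin

text \<open>Complex group algebra of a finite group G, realised as complex-valued
functions on the carrier of G (zero outside), with convolution product.\<close>

definition ga_sub :: "('g, 'b) monoid_scheme \<Rightarrow> 'g set \<Rightarrow> ('g \<Rightarrow> complex) set" where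
  "ga_sub G K = {a. \<forall>x. x \<notin> K \<longrightarrow> a x = 0}"

definition ga_mult :: "('g, 'b) monoid_scheme \<Rightarrow> ('g \<Rightarrow> complex) \<Rightarrow> ('g \<Rightarrow> complex) \<Rightarrow> ('g \<Rightarrow> complex)" where
  "ga_mult G a b = (\<lambda>x. if x \<in> carrier G
      then (\<Sum>y\<in>carrier G. a y * b (inv\<^bsub>G\<^esub> y \<otimes>\<^bsub>G\<^esub> x)) else 0)"

definition ga_delta :: "('g, 'b) monoid_scheme \<Rightarrow> 'g \<Rightarrow> ('g \<Rightarrow> complex)" where
  "ga_delta G g = (\<lambda>x. if x = g then 1 else 0)"

definition ga_conj :: "('g, 'b) monoid_scheme \<Rightarrow> 'g \<Rightarrow> ('g \<Rightarrow> complex) \<Rightarrow> ('g \<Rightarrow> complex)" where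
  "ga_conj G h a = ga_mult G (ga_mult G (ga_delta G h) a) (ga_delta G (inv\<^bsub>G\<^esub> h))"

definition ga_basis :: "('g, 'b) monoid_scheme \<Rightarrow> 'g set \<Rightarrow> ('g \<Rightarrow> complex) set \<Rightarrow> bool" where
  "ga_basis G K B \<longleftrightarrow> finite B \<and> B \<subseteq> ga_sub G K \<and>
     (\<forall>f. (\<lambda>x. \<Sum>b\<in>B. f b * b x) = (\<lambda>x. 0) \<longrightarrow> (\<forall>b\<in>B. f b = 0)) \<and>
     (\<forall>a\<in>ga_sub G K. \<exists>f. a = (\<lambda>x. \<Sum>b\<in>B. f b * b x))"

definition idem_eigenbasis :: "('g, 'b) monoid_scheme \<Rightarrow> 'g set \<Rightarrow> ('g \<Rightarrow> complex) set" where
  "idem_eigenbasis G K = (THE B. ga_basis G K B \<and>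
     (\<forall>b\<in>B. \<forall>a\<in>ga_sub G K. \<exists>\<mu>. ga_mult G a b = (\<lambda>x. \<mu> * b x)) \<and>
     (\<forall>b\<in>B. ga_mult G b b = b) \<and>
     (\<forall>b\<in>B. \<forall>b'\<in>B. b \<noteq> b' \<longrightarrow> ga_mult G b b' = (\<lambda>x. 0)))"

definition elem_mat :: "nat \<Rightarrow> nat \<Rightarrow> nat \<Rightarrow> complex mat" where
  "elem_mat c i j = mat c c (\<lambda>(k, l). if k = i \<and> l = j then 1 else 0)"

end

theory Submission
  imports Defs "HOL-Algebra.Multiplicative_Group"
begin

text \<open>
  The map \<open>M \<mapsto> \<Sum> M\<^sub>i\<^sub>j e\<^sub>i\<^sub>j\<close> is then an injective algebra homomorphism with image \<open>\<complex>[G] J\<close>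
    (each \<open>\<delta>\<^sub>g e\<^sub>k\<^sub>k\<close> is a multiple of some \<open>e\<^sub>m\<^sub>k\<close>), and its inverse is the required isomorphism.
\<close>

section \<open>The convolution algebra of a finite group\<close>

lemma (in group) mult_inv_cancel_left [simp]: "a \<in> carrier G \<Longrightarrow> b \<in> carrier G \<Longrightarrow> a \<otimes> (inv a \<otimes> b) = b"
  by (simp add: m_assoc[symmetric])

lemma (in group) inv_mult_cancel_left [simp]: "a \<in> carrier G \<Longrightarrow> b \<in> carrier G \<Longrightarrow> inv a \<otimes> (a \<otimes> b) = b"
  by (simp add: m_assoc[symmetric])

locale group_algebra = group G for G :: "('g, 'b) monoid_scheme" (structure) +
  assumes finite_carrier: "finite (carrier G)"
begin

abbreviation conv :: "('g \<Rightarrow> complex) \<Rightarrow> ('g \<Rightarrow> complex) \<Rightarrow> 'g \<Rightarrow> complex" (infixl "\<star>" 70)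
  where "a \<star> b \<equiv> ga_mult G a b"

abbreviation \<delta> :: "'g \<Rightarrow> 'g \<Rightarrow> complex" where "\<delta> g \<equiv> ga_delta G g"

abbreviation zero_ga :: "'g \<Rightarrow> complex" where "zero_ga \<equiv> (\<lambda>x. 0)"

abbreviation CG :: "('g \<Rightarrow> complex) set" where "CG \<equiv> ga_sub G (carrier G)"

lemma conv_outside: "x \<notin> carrier G \<Longrightarrow> (a \<star> b) x = 0"
  by (simp add: ga_mult_def)

lemma conv_apply: "x \<in> carrier G \<Longrightarrow> (a \<star> b) x = (\<Sum>y\<in>carrier G. a y * b (inv y \<otimes> x))"
  by (simp add: ga_mult_def)

lemma conv_in_CG: "a \<star> b \<in> CG"
  by (simp add: ga_sub_def conv_outside)

lemma ga_sub_in_CG: "a \<in> ga_sub G S \<Longrightarrow> S \<subseteq> carrier G \<Longrightarrow> a \<in> CG"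
  unfolding ga_sub_def by blast

text \<open>Sums over the group are invariant under left translation; this gives associativity.\<close>
lemma sum_left_translate:
  "g \<in> carrier G \<Longrightarrow> (\<Sum>y\<in>carrier G. f (g \<otimes> y)) = (\<Sum>y\<in>carrier G. f y)"
  by (rule sum.reindex_bij_witness[where i="\<lambda>y. inv g \<otimes> y" and j="\<lambda>y. g \<otimes> y"])
     (auto simp: m_assoc[symmetric])

lemma conv_assoc: "(a \<star> b) \<star> c = a \<star> (b \<star> c)"
proof (rule ext)
  fix x
  show "((a \<star> b) \<star> c) x = (a \<star> (b \<star> c)) x"
  proof (cases "x \<in> carrier G")
    case False
    then show ?thesis by (simp add: conv_outside)
  next
    case x: True
    have inner: "(\<Sum>y\<in>carrier G. b (inv z \<otimes> y) * c (inv y \<otimes> x)) = (b \<star> c) (inv z \<otimes> x)"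
      if z: "z \<in> carrier G" for z
    proof -
      have "(\<Sum>y\<in>carrier G. b (inv z \<otimes> y) * c (inv y \<otimes> x)) =
            (\<Sum>y\<in>carrier G. b (inv z \<otimes> (z \<otimes> y)) * c (inv (z \<otimes> y) \<otimes> x))"
        using sum_left_translate[OF z, of "\<lambda>y. b (inv z \<otimes> y) * c (inv y \<otimes> x)"] by simp
      also have "\<dots> = (\<Sum>y\<in>carrier G. b y * c (inv y \<otimes> (inv z \<otimes> x)))"
        using z x by (intro sum.cong) (auto simp: m_assoc[symmetric] inv_mult_group)
      finally show ?thesis using z x by (simp add: conv_apply)
    qed
    have "((a \<star> b) \<star> c) x = (\<Sum>y\<in>carrier G. \<Sum>z\<in>carrier G. a z * (b (inv z \<otimes> y) * c (inv y \<otimes> x)))"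
      using x by (simp add: conv_apply sum_distrib_right mult.assoc)
    also have "\<dots> = (\<Sum>z\<in>carrier G. a z * (\<Sum>y\<in>carrier G. b (inv z \<otimes> y) * c (inv y \<otimes> x)))"
      by (subst sum.swap) (simp add: sum_distrib_left)
    also have "\<dots> = (a \<star> (b \<star> c)) x"
      using x by (simp add: conv_apply inner)
    finally show ?thesis .
  qed
qed

lemma conv_left_commute: "a \<star> b = b \<star> a \<Longrightarrow> a \<star> (b \<star> w) = b \<star> (a \<star> w)"
  by (simp add: conv_assoc[symmetric])

lemma conv_idem_left: "a \<star> a = a \<Longrightarrow> a \<star> (a \<star> w) = a \<star> w"
  by (simp add: conv_assoc[symmetric])

lemma conv_swap_left: "a \<star> x = y \<star> a \<Longrightarrow> a \<star> (x \<star> w) = y \<star> (a \<star> w)"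
  by (simp add: conv_assoc[symmetric])

lemma conv_lincomb_left:
  "(\<lambda>x. \<Sum>i\<in>I. m i * f i x) \<star> b = (\<lambda>x. \<Sum>i\<in>I. m i * (f i \<star> b) x)"
  by (rule ext)
     (simp add: ga_mult_def sum_distrib_right sum_distrib_left mult.assoc sum.swap[of _ "carrier G"])

lemma conv_lincomb_right:
  "b \<star> (\<lambda>x. \<Sum>i\<in>I. m i * f i x) = (\<lambda>x. \<Sum>i\<in>I. m i * (b \<star> f i) x)"
  by (rule ext)
     (simp add: ga_mult_def sum_distrib_right sum_distrib_left mult.assoc mult.left_commute
        sum.swap[of _ "carrier G"])

lemma conv_sum_left: "(\<lambda>x. \<Sum>i\<in>I. f i x) \<star> b = (\<lambda>x. \<Sum>i\<in>I. (f i \<star> b) x)"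
  using conv_lincomb_left[where m="\<lambda>_. 1"] by simp

lemma conv_sum_right: "b \<star> (\<lambda>x. \<Sum>i\<in>I. f i x) = (\<lambda>x. \<Sum>i\<in>I. (b \<star> f i) x)"
  using conv_lincomb_right[where m="\<lambda>_. 1"] by simp

lemma conv_scale_left: "(\<lambda>x. m * a x) \<star> b = (\<lambda>x. m * (a \<star> b) x)"
  by (rule ext) (simp add: ga_mult_def sum_distrib_left mult.assoc)

lemma conv_scale_right: "b \<star> (\<lambda>x. m * a x) = (\<lambda>x. m * (b \<star> a) x)"
  by (rule ext) (simp add: ga_mult_def sum_distrib_left mult.assoc mult.left_commute)

lemma conv_zero_left [simp]: "zero_ga \<star> b = zero_ga"
  by (rule ext) (simp add: ga_mult_def)

lemma delta_conv: "g \<in> carrier G \<Longrightarrow> (\<delta> g \<star> a) x = (if x \<in> carrier G then a (inv g \<otimes> x) else 0)"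
proof (cases "x \<in> carrier G")
  case True
  assume g: "g \<in> carrier G"
  have "(\<delta> g \<star> a) x = (\<Sum>y\<in>carrier G. if y = g then a (inv g \<otimes> x) else 0)"
    using True by (auto simp: conv_apply ga_delta_def intro: sum.cong)
  then show ?thesis using g True finite_carrier by simp
qed (simp add: conv_outside)

lemma conv_delta: "g \<in> carrier G \<Longrightarrow> (a \<star> \<delta> g) x = (if x \<in> carrier G then a (x \<otimes> inv g) else 0)"
proof (cases "x \<in> carrier G")
  case True
  assume g: "g \<in> carrier G"
  have "inv y \<otimes> x = g \<longleftrightarrow> y = x \<otimes> inv g" if "y \<in> carrier G" for y
    using that g True by (metis inv_closed inv_solve_left' inv_solve_right m_closed)
  then have "(a \<star> \<delta> g) x = (\<Sum>y\<in>carrier G. if y = x \<otimes> inv g then a y else 0)"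
    using True by (auto simp: conv_apply ga_delta_def intro: sum.cong)
  then show ?thesis using g True finite_carrier by simp
qed (simp add: conv_outside)

lemma delta_delta: "g \<in> carrier G \<Longrightarrow> h \<in> carrier G \<Longrightarrow> \<delta> g \<star> \<delta> h = \<delta> (g \<otimes> h)"
proof (rule ext)
  fix x assume g: "g \<in> carrier G" and h: "h \<in> carrier G"
  have "x \<in> carrier G \<Longrightarrow> inv g \<otimes> x = h \<longleftrightarrow> x = g \<otimes> h" using g h by (metis inv_solve_left')
  moreover have "x \<notin> carrier G \<Longrightarrow> x \<noteq> g \<otimes> h" using g h by auto
  ultimately show "(\<delta> g \<star> \<delta> h) x = \<delta> (g \<otimes> h) x"
    unfolding delta_conv[OF g] by (auto simp: ga_delta_def)
qed

lemma delta_delta_conv: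
  "g \<in> carrier G \<Longrightarrow> h \<in> carrier G \<Longrightarrow> \<delta> g \<star> (\<delta> h \<star> a) = \<delta> (g \<otimes> h) \<star> a"
  by (simp add: conv_assoc[symmetric] delta_delta)

lemma delta_one_conv: "a \<in> CG \<Longrightarrow> \<delta> \<one> \<star> a = a"
  by (rule ext) (auto simp: delta_conv ga_sub_def)

lemma conv_delta_one: "a \<in> CG \<Longrightarrow> a \<star> \<delta> \<one> = a"
  by (rule ext) (auto simp: conv_delta ga_sub_def)

lemma delta_expansion:
  assumes "a \<in> ga_sub G S" "S \<subseteq> carrier G"
  shows "a = (\<lambda>x. \<Sum>g\<in>S. a g * \<delta> g x)"
proof (rule ext)
  fix x
  have "finite S" using assms(2) finite_carrier finite_subset by blast
  then show "a x = (\<Sum>g\<in>S. a g * \<delta> g x)"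
    using assms(1) by (cases "x \<in> S") (auto simp: ga_delta_def ga_sub_def if_distrib cong: if_cong)
qed

lemma commute_by_deltas:
  assumes "a \<in> ga_sub G S" "S \<subseteq> carrier G" "\<And>g. g \<in> S \<Longrightarrow> \<delta> g \<star> b = b \<star> \<delta> g"
  shows "a \<star> b = b \<star> a"
proof -
  have "a \<star> b = (\<lambda>x. \<Sum>g\<in>S. a g * (\<delta> g \<star> b) x)"
    by (subst delta_expansion[OF assms(1,2)]) (rule conv_lincomb_left)
  also have "\<dots> = (\<lambda>x. \<Sum>g\<in>S. a g * (b \<star> \<delta> g) x)" using assms(3) by simp
  also have "\<dots> = b \<star> a"
    by (subst (2) delta_expansion[OF assms(1,2)]) (rule conv_lincomb_right[symmetric])
  finally show ?thesis .
qed

lemma conv_apply_product: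
  assumes N: "subgroup N G" and S: "subgroup S G" and NS: "N \<inter> S = {\<one>}"
    and a: "a \<in> ga_sub G N" and b: "b \<in> ga_sub G S" and n: "n \<in> N" and s: "s \<in> S"
  shows "(a \<star> b) (n \<otimes> s) = a n * b s"
proof -
  have nc: "n \<in> carrier G" and sc: "s \<in> carrier G"
    using n s N S by (auto simp: subgroup.mem_carrier)
  have vanish: "a y * b (inv y \<otimes> (n \<otimes> s)) = 0" if y: "y \<in> carrier G" "y \<noteq> n" for y
  proof (cases "y \<in> N \<and> inv y \<otimes> (n \<otimes> s) \<in> S")
    case True
    then have "inv y \<otimes> n = (inv y \<otimes> (n \<otimes> s)) \<otimes> inv s" using y nc sc by (simp add: m_assoc)
    also have "\<dots> \<in> S" using True s by (simp add: subgroup.m_closed[OF S] subgroup.m_inv_closed[OF S])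
    finally have "inv y \<otimes> n \<in> N \<inter> S"
      using True n by (simp add: subgroup.m_closed[OF N] subgroup.m_inv_closed[OF N])
    then have "inv y \<otimes> n = \<one>" using NS by blast
    then have "n = y" using y nc by (metis inv_closed inv_inv inv_equality l_inv)
    then show ?thesis using y by simp
  qed (use a b in \<open>auto simp: ga_sub_def\<close>)
  have "(a \<star> b) (n \<otimes> s) = (\<Sum>y\<in>carrier G. if y = n then a n * b s else 0)"
    unfolding conv_apply[OF m_closed[OF nc sc]]
  proof (rule sum.cong[OF refl])
    fix y assume "y \<in> carrier G"
    then show "a y * b (inv y \<otimes> (n \<otimes> s)) = (if y = n then a n * b s else 0)"
      using vanish nc sc by (cases "y = n") (simp_all add: m_assoc[symmetric])
  qed
  then show ?thesis using nc finite_carrier by simp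
qed


lemma ga_conj_apply:
  "h \<in> carrier G \<Longrightarrow> ga_conj G h a x = (if x \<in> carrier G then a (inv h \<otimes> x \<otimes> h) else 0)"
  by (simp add: ga_conj_def conv_delta delta_conv m_assoc)

lemma ga_conj_in_CG: "ga_conj G h a \<in> CG"
  by (simp add: ga_conj_def conv_in_CG)

lemma ga_conj_comp:
  "g \<in> carrier G \<Longrightarrow> h \<in> carrier G \<Longrightarrow> ga_conj G g (ga_conj G h a) = ga_conj G (g \<otimes> h) a"
  by (rule ext) (simp add: ga_conj_apply inv_mult_group m_assoc)

lemma ga_conj_one: "a \<in> CG \<Longrightarrow> ga_conj G \<one> a = a"
  by (rule ext) (auto simp: ga_conj_apply ga_sub_def)

lemma ga_conj_inv: "h \<in> carrier G \<Longrightarrow> a \<in> CG \<Longrightarrow> ga_conj G (inv h) (ga_conj G h a) = a"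
  by (simp add: ga_conj_comp ga_conj_one)

lemma ga_conj_conv: "h \<in> carrier G \<Longrightarrow> ga_conj G h (a \<star> b) = ga_conj G h a \<star> ga_conj G h b"
  by (simp add: ga_conj_def conv_assoc delta_delta_conv delta_one_conv conv_in_CG)

lemma ga_conj_scale: "h \<in> carrier G \<Longrightarrow> ga_conj G h (\<lambda>x. m * a x) = (\<lambda>x. m * ga_conj G h a x)"
  by (rule ext) (simp add: ga_conj_apply)

lemma ga_conj_zero: "h \<in> carrier G \<Longrightarrow> ga_conj G h zero_ga = zero_ga"
  by (rule ext) (simp add: ga_conj_apply)

lemma ga_conj_delta:
  "h \<in> carrier G \<Longrightarrow> g \<in> carrier G \<Longrightarrow> ga_conj G h (\<delta> g) = \<delta> (h \<otimes> g \<otimes> inv h)"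
proof (rule ext)
  fix x assume h: "h \<in> carrier G" and g: "g \<in> carrier G"
  have "x \<in> carrier G \<Longrightarrow> inv h \<otimes> x \<otimes> h = g \<longleftrightarrow> x = h \<otimes> g \<otimes> inv h"
    using h g by (metis inv_closed inv_solve_left' inv_solve_right m_closed m_assoc)
  moreover have "x \<notin> carrier G \<Longrightarrow> x \<noteq> h \<otimes> g \<otimes> inv h" using h g by auto
  ultimately show "ga_conj G h (\<delta> g) x = \<delta> (h \<otimes> g \<otimes> inv h) x"
    using h by (auto simp: ga_conj_apply ga_delta_def)
qed

lemma delta_conv_swap: "h \<in> carrier G \<Longrightarrow> a \<in> CG \<Longrightarrow> \<delta> h \<star> a = ga_conj G h a \<star> \<delta> h"
  by (simp add: ga_conj_def conv_assoc delta_delta conv_delta_one conv_in_CG)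

end

section \<open>Eigen-idempotents of the algebra of a finite abelian subgroup\<close>

context group_algebra
begin

definition eigen_idempotent :: "'g set \<Rightarrow> ('g \<Rightarrow> complex) \<Rightarrow> bool" where
  "eigen_idempotent K b \<longleftrightarrow> b \<in> ga_sub G K \<and> b \<star> b = b \<and> b \<noteq> zero_ga \<and>
     (\<forall>k\<in>K. \<exists>m. \<delta> k \<star> b = (\<lambda>x. m * b x))"

text \<open>Conjugating by a group element maps eigen-idempotents of a normal subgroup to
  eigen-idempotents: conjugation is an automorphism preserving \<open>\<complex>[N]\<close> and permuting the \<open>\<delta> k\<close>.\<close>
lemma eigen_idempotent_conj:
  assumes N: "N \<lhd> G" and h: "h \<in> carrier G" and b: "eigen_idempotent N b"
  shows "eigen_idempotent N (ga_conj G h b)"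
  unfolding eigen_idempotent_def
proof (intro conjI ballI)
  have bN: "b \<in> ga_sub G N" and bG: "b \<in> CG"
    using b ga_sub_in_CG normal_imp_subgroup[OF N] by (auto simp: eigen_idempotent_def subgroup.subset)
  show "ga_conj G h b \<in> ga_sub G N"
    unfolding ga_sub_def
  proof (intro CollectI allI impI)
    fix x assume x: "x \<notin> N"
    have "inv h \<otimes> x \<otimes> h \<notin> N" if xc: "x \<in> carrier G"
    proof
      assume "inv h \<otimes> x \<otimes> h \<in> N"
      then have "h \<otimes> (inv h \<otimes> x \<otimes> h) \<otimes> inv h \<in> N" by (rule normal.inv_op_closed2[OF N h])
      moreover have "h \<otimes> (inv h \<otimes> x \<otimes> h) \<otimes> inv h = x" using h xc by (simp add: m_assoc)
      ultimately show False using x by simp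
    qed
    then show "ga_conj G h b x = 0" using h bN by (simp add: ga_conj_apply ga_sub_def)
  qed
  show "ga_conj G h b \<star> ga_conj G h b = ga_conj G h b"
    using ga_conj_conv[OF h, of b b] b by (simp add: eigen_idempotent_def)
  show "ga_conj G h b \<noteq> zero_ga"
    using ga_conj_inv[OF h bG] ga_conj_zero[OF inv_closed[OF h]] b
    by (auto simp: eigen_idempotent_def)
  fix k assume k: "k \<in> N"
  define k' where "k' = inv h \<otimes> k \<otimes> h"
  have k': "k' \<in> N" unfolding k'_def by (rule normal.inv_op_closed1[OF N h k])
  then obtain m where m: "\<delta> k' \<star> b = (\<lambda>x. m * b x)" using b by (auto simp: eigen_idempotent_def)
  have "\<delta> k = ga_conj G h (\<delta> k')"
    using k k' h normal_imp_subgroup[OF N] by (simp add: ga_conj_delta subgroup.mem_carrier k'_def m_assoc)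
  then have "\<delta> k \<star> ga_conj G h b = ga_conj G h (\<delta> k' \<star> b)" by (simp add: ga_conj_conv[OF h])
  then show "\<exists>m. \<delta> k \<star> ga_conj G h b = (\<lambda>x. m * ga_conj G h b x)"
    unfolding m ga_conj_scale[OF h] by blast
qed

end

locale abelian_subgroup_algebra = group_algebra G for G :: "('g, 'b) monoid_scheme" (structure) +
  fixes K :: "'g set"
  assumes K_subgroup: "subgroup K G"
    and K_comm: "\<And>x y. x \<in> K \<Longrightarrow> y \<in> K \<Longrightarrow> x \<otimes> y = y \<otimes> x"
begin

lemma K_carrier: "K \<subseteq> carrier G" by (rule subgroup.subset[OF K_subgroup])
lemma K_closed [intro]: "x \<in> K \<Longrightarrow> x \<in> carrier G" using K_carrier by blast
lemma K_finite: "finite K" by (rule finite_subset[OF K_carrier finite_carrier])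
lemma K_one: "\<one> \<in> K" by (rule subgroup.one_closed[OF K_subgroup])
lemma K_mult: "x \<in> K \<Longrightarrow> y \<in> K \<Longrightarrow> x \<otimes> y \<in> K" by (rule subgroup.m_closed[OF K_subgroup])
lemma K_inv: "x \<in> K \<Longrightarrow> inv x \<in> K" by (rule subgroup.m_inv_closed[OF K_subgroup])
lemma card_K_pos: "card K > 0" using K_finite K_one by (auto simp: card_gt_0_iff)

lemma delta_in_CK: "k \<in> K \<Longrightarrow> \<delta> k \<in> ga_sub G K"
  by (simp add: ga_sub_def ga_delta_def)

lemma CK_commute: "a \<in> ga_sub G K \<Longrightarrow> b \<in> ga_sub G K \<Longrightarrow> a \<star> b = b \<star> a"
proof (rule commute_by_deltas[OF _ K_carrier])
  fix g assume a: "a \<in> ga_sub G K" and b: "b \<in> ga_sub G K" and g: "g \<in> K"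
  have "b \<star> \<delta> g = \<delta> g \<star> b"
  proof (rule commute_by_deltas[OF b K_carrier])
    fix k assume "k \<in> K"
    then show "\<delta> k \<star> \<delta> g = \<delta> g \<star> \<delta> k" using g by (simp add: delta_delta K_closed K_comm)
  qed
  then show "\<delta> g \<star> b = b \<star> \<delta> g" ..
qed

lemma conv_eigenvector:
  assumes a: "a \<in> ga_sub G K" and eig: "\<And>k. k \<in> K \<Longrightarrow> \<delta> k \<star> b = (\<lambda>x. \<chi> k * b x)"
  shows "a \<star> b = (\<lambda>x. (\<Sum>k\<in>K. a k * \<chi> k) * b x)"
proof -
  have "a \<star> b = (\<lambda>x. \<Sum>k\<in>K. a k * (\<delta> k \<star> b) x)"
    by (subst delta_expansion[OF a K_carrier]) (rule conv_lincomb_left)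
  also have "\<dots> = (\<lambda>x. (\<Sum>k\<in>K. a k * \<chi> k) * b x)"
    using eig by (simp add: sum_distrib_right mult.assoc)
  finally show ?thesis .
qed

text \<open>Two eigen-idempotents with the same eigenvalues coincide: both are determined by their
  value at \<open>\<one>\<close> up to a scalar, and idempotency fixes that scalar.\<close>
lemma eigen_idempotent_unique:
  assumes b: "eigen_idempotent K b" and b': "eigen_idempotent K b'"
    and eig: "\<And>k. k \<in> K \<Longrightarrow> \<delta> k \<star> b = (\<lambda>x. \<chi> k * b x)"
    and eig': "\<And>k. k \<in> K \<Longrightarrow> \<delta> k \<star> b' = (\<lambda>x. \<chi> k * b' x)"
  shows "b = b'"
proof -
  have determined_by_one: "f g = \<chi> (inv g) * f \<one>"
    if "g \<in> K" "\<delta> (inv g) \<star> f = (\<lambda>x. \<chi> (inv g) * f x)" for f g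
    using fun_cong[OF that(2), of \<one>] that(1) by (simp add: delta_conv K_closed K_inv)
  have supp: "b \<in> ga_sub G K" "b' \<in> ga_sub G K"
    using b b' by (simp_all add: eigen_idempotent_def)
  define l where "l = b \<one> / b' \<one>"
  have b'_one: "b' \<one> \<noteq> 0"
  proof
    assume "b' \<one> = 0"
    then have "b' x = 0" for x
      using determined_by_one[of x b'] eig'[OF K_inv] supp(2) by (cases "x \<in> K") (auto simp: ga_sub_def)
    then show False using b' by (auto simp: eigen_idempotent_def)
  qed
  have scaled: "b = (\<lambda>x. l * b' x)"
  proof (rule ext)
    fix x show "b x = l * b' x"
      using determined_by_one[of x b] determined_by_one[of x b'] eig[OF K_inv] eig'[OF K_inv] supp b'_one
      by (cases "x \<in> K") (auto simp: l_def ga_sub_def)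
  qed
  have "(\<lambda>x. l * b' x) = (\<lambda>x. l * (l * b' x))"
    using b b' scaled by (simp add: eigen_idempotent_def conv_scale_left conv_scale_right)
  moreover obtain x0 where "b' x0 \<noteq> 0" using b' by (auto simp: eigen_idempotent_def)
  ultimately have "l = l * l" by (metis mult_cancel_right mult.assoc)
  moreover have "l \<noteq> 0" using b scaled by (auto simp: eigen_idempotent_def)
  ultimately have "l = 1" by (metis mult_cancel_left1)
  then show ?thesis using scaled by simp
qed

lemma conv_eigenvectors_distinct:
  assumes b: "b \<in> ga_sub G K" and b': "b' \<in> ga_sub G K"
    and eig: "\<delta> k \<star> b = (\<lambda>x. m * b x)" and eig': "\<delta> k \<star> b' = (\<lambda>x. m' * b' x)"
    and ne: "m \<noteq> m'"
  shows "b \<star> b' = zero_ga"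
proof -
  have "(\<lambda>x. m * (b \<star> b') x) = \<delta> k \<star> (b \<star> b')"
    by (simp add: conv_assoc[symmetric] eig conv_scale_left)
  also have "\<dots> = \<delta> k \<star> (b' \<star> b)" using CK_commute[OF b b'] by simp
  also have "\<dots> = (\<lambda>x. m' * (b \<star> b') x)"
    by (simp add: conv_assoc[symmetric] eig' conv_scale_left CK_commute[OF b b'])
  finally have "(m - m') * (b \<star> b') x = 0" for x
    by (metis (mono_tags) left_diff_distrib right_minus_eq)
  then show ?thesis using ne by auto
qed

lemma eigen_idempotents_orthogonal:
  assumes b: "eigen_idempotent K b" and b': "eigen_idempotent K b'" and ne: "b \<noteq> b'"
  shows "b \<star> b' = zero_ga"
proof -
  obtain \<chi> where eig: "\<And>k. k \<in> K \<Longrightarrow> \<delta> k \<star> b = (\<lambda>x. \<chi> k * b x)"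
    using b unfolding eigen_idempotent_def by metis
  obtain \<chi>' where eig': "\<And>k. k \<in> K \<Longrightarrow> \<delta> k \<star> b' = (\<lambda>x. \<chi>' k * b' x)"
    using b' unfolding eigen_idempotent_def by metis
  show ?thesis
  proof (cases "\<forall>k\<in>K. \<chi> k = \<chi>' k")
    case True
    then have "b = b'" using eigen_idempotent_unique[OF b b' eig] eig' by simp
    then show ?thesis using ne by simp
  next
    case False
    then obtain k where k: "k \<in> K" "\<chi> k \<noteq> \<chi>' k" by auto
    show ?thesis
      by (rule conv_eigenvectors_distinct[OF _ _ eig[OF k(1)] eig'[OF k(1)] k(2)])
         (use b b' in \<open>simp_all add: eigen_idempotent_def\<close>)
  qed
qed

end

section \<open>Characters of finite abelian groups\<close>

lemma (in group) subgroup_nat_pow_closed: "subgroup L G \<Longrightarrow> x \<in> L \<Longrightarrow> x [^] (n::nat) \<in> L"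
  by (induction n) (auto simp: subgroup.one_closed subgroup.m_closed)

context group_algebra
begin

definition characters :: "'g set \<Rightarrow> ('g \<Rightarrow> complex) set" where
  "characters L = {\<chi>. \<chi> \<one> = 1 \<and> (\<forall>x\<in>L. \<forall>y\<in>L. \<chi> (x \<otimes> y) = \<chi> x * \<chi> y) \<and> (\<forall>x. x \<notin> L \<longrightarrow> \<chi> x = 0)}"

lemma
  assumes "\<chi> \<in> characters L"
  shows character_one: "\<chi> \<one> = 1"
    and character_mult: "x \<in> L \<Longrightarrow> y \<in> L \<Longrightarrow> \<chi> (x \<otimes> y) = \<chi> x * \<chi> y"
    and character_outside: "x \<notin> L \<Longrightarrow> \<chi> x = 0"
  using assms unfolding characters_def by auto

lemma character_inv:
  assumes "\<chi> \<in> characters L" "subgroup L G" "x \<in> L"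
  shows "\<chi> x * \<chi> (inv x) = 1"
  using character_mult[OF assms(1) assms(3) subgroup.m_inv_closed[OF assms(2,3)]]
    character_one[OF assms(1)] subgroup.mem_carrier[OF assms(2,3)] by simp

lemma character_nonzero: "\<chi> \<in> characters L \<Longrightarrow> subgroup L G \<Longrightarrow> x \<in> L \<Longrightarrow> \<chi> x \<noteq> 0"
  using character_inv by force

lemma character_pow:
  assumes "\<chi> \<in> characters L" "subgroup L G" "x \<in> L"
  shows "\<chi> (x [^] (q::nat)) = \<chi> x ^ q"
  using assms
  by (induction q) (simp_all add: character_one character_mult subgroup_nat_pow_closed mult.commute)

definition rel_order :: "'g set \<Rightarrow> 'g \<Rightarrow> nat" where
  "rel_order L g = (LEAST n. 0 < n \<and> g [^] n \<in> L)"

lemma rel_order: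
  assumes L: "subgroup L G" and g: "g \<in> carrier G"
  shows "0 < rel_order L g" "g [^] rel_order L g \<in> L"
proof -
  have "0 < order G"
    using finite_carrier one_closed unfolding order_def by (auto simp: card_gt_0_iff)
  then have "0 < order G \<and> g [^] order G \<in> L"
    using pow_order_eq_1[OF g] subgroup.one_closed[OF L] by simp
  then have "0 < rel_order L g \<and> g [^] rel_order L g \<in> L"
    unfolding rel_order_def by (rule LeastI)
  then show "0 < rel_order L g" "g [^] rel_order L g \<in> L" by auto
qed

lemma rel_order_dvd:
  assumes L: "subgroup L G" and g: "g \<in> carrier G" and d: "g [^] (d::nat) \<in> L"
  shows "rel_order L g dvd d"
proof -
  define n where "n = rel_order L g"
  have n: "0 < n" "g [^] n \<in> L" using rel_order[OF L g] unfolding n_def by auto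
  have gq: "g [^] (n * (d div n)) \<in> L"
    using subgroup_nat_pow_closed[OF L n(2)] by (simp add: nat_pow_pow[OF g])
  have "g [^] d = g [^] (n * (d div n)) \<otimes> g [^] (d mod n)"
    by (simp add: nat_pow_mult[OF g])
  then have "g [^] (d mod n) = inv (g [^] (n * (d div n))) \<otimes> g [^] d"
    using g by (simp add: m_assoc[symmetric])
  then have "g [^] (d mod n) \<in> L"
    using gq d by (simp add: subgroup.m_closed[OF L] subgroup.m_inv_closed[OF L])
  moreover have "\<not> (0 < d mod n \<and> g [^] (d mod n) \<in> L)"
    using n(1) unfolding n_def rel_order_def by (intro not_less_Least) (simp add: n_def[symmetric])
  ultimately show ?thesis unfolding n_def[symmetric] by auto
qed

end

context abelian_subgroup_algebra
begin

text \<open>The subgroup generated by \<open>L \<subseteq> K\<close> and \<open>g \<in> K\<close>; since \<open>K\<close> is abelian it is \<open>L\<close> times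
  the powers of \<open>g\<close>.\<close>
definition adjoin :: "'g set \<Rightarrow> 'g \<Rightarrow> 'g set" where
  "adjoin L g = {l \<otimes> g [^] j | l j. l \<in> L \<and> (j::nat) \<in> UNIV}"

text \<open>The candidate extension \<open>l g\<^sup>j \<mapsto> \<chi>(l) z\<^sup>j\<close> of a character \<open>\<chi>\<close> of \<open>L\<close>.\<close>
definition extend_char :: "'g set \<Rightarrow> 'g \<Rightarrow> ('g \<Rightarrow> complex) \<Rightarrow> complex \<Rightarrow> 'g \<Rightarrow> complex" where
  "extend_char L g \<chi> z x = (if x \<in> adjoin L g
     then (SOME r. \<exists>l\<in>L. \<exists>j::nat. x = l \<otimes> g [^] j \<and> r = \<chi> l * z ^ j) else 0)"

context
  fixes L g
  assumes L: "subgroup L G" and LK: "L \<subseteq> K" and gK: "g \<in> K"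
begin

lemma L_closed: "l \<in> L \<Longrightarrow> l \<in> carrier G"
  by (rule subgroup.mem_carrier[OF L])

lemma adjoin_mult:
  assumes "l \<in> L" "l' \<in> L"
  shows "(l \<otimes> g [^] (j::nat)) \<otimes> (l' \<otimes> g [^] (k::nat)) = (l \<otimes> l') \<otimes> g [^] (j + k)"
proof -
  have comm: "g [^] j \<otimes> l' = l' \<otimes> g [^] j"
    using K_comm subgroup_nat_pow_closed[OF K_subgroup gK] LK assms(2) by blast
  have "(l \<otimes> g [^] j) \<otimes> (l' \<otimes> g [^] k) = l \<otimes> ((g [^] j \<otimes> l') \<otimes> g [^] k)"
    using assms gK by (simp add: L_closed K_closed m_assoc)
  also have "\<dots> = (l \<otimes> l') \<otimes> (g [^] j \<otimes> g [^] k)"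
    unfolding comm using assms gK by (simp add: L_closed K_closed m_assoc)
  finally show ?thesis using gK by (simp add: K_closed nat_pow_mult)
qed

lemma adjoin_subgroup: "subgroup (adjoin L g) G"
proof (rule subgroupI)
  show "adjoin L g \<subseteq> carrier G" unfolding adjoin_def using L_closed gK by auto
  have "\<one> = \<one> \<otimes> g [^] (0::nat)" by simp
  then show "adjoin L g \<noteq> {}" unfolding adjoin_def using subgroup.one_closed[OF L] by blast
next
  fix a assume "a \<in> adjoin L g"
  then obtain l j where l: "l \<in> L" and a: "a = l \<otimes> g [^] (j::nat)" unfolding adjoin_def by blast
  define m where "m = order G"
  have il: "inv l \<in> L" by (rule subgroup.m_inv_closed[OF L l])
  have "0 < m"
    using finite_carrier one_closed unfolding m_def order_def by (auto simp: card_gt_0_iff)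
  then have "(inv l \<otimes> g [^] ((m - 1) * j)) \<otimes> a = \<one> \<otimes> (g [^] m) [^] j"
    unfolding a adjoin_mult[OF il l] using l gK
    by (simp add: L_closed K_closed nat_pow_pow algebra_simps flip: mult_Suc)
  also have "\<dots> = \<one>" unfolding m_def using gK by (simp add: pow_order_eq_1 finite_carrier K_closed)
  finally have "inv a = inv l \<otimes> g [^] ((m - 1) * j)"
    using l il gK a by (intro inv_equality) (auto simp: L_closed K_closed)
  then show "inv a \<in> adjoin L g" unfolding adjoin_def using il by blast
next
  fix a b assume "a \<in> adjoin L g" "b \<in> adjoin L g"
  then obtain l l' j k where "l \<in> L" "a = l \<otimes> g [^] (j::nat)" "l' \<in> L" "b = l' \<otimes> g [^] (k::nat)"
    unfolding adjoin_def by blast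
  then show "a \<otimes> b \<in> adjoin L g"
    unfolding adjoin_def using adjoin_mult subgroup.m_closed[OF L] by blast
qed

lemma L_subset_adjoin: "L \<subseteq> adjoin L g"
proof
  fix l assume l: "l \<in> L"
  then have "l = l \<otimes> g [^] (0::nat)" using L_closed by simp
  then show "l \<in> adjoin L g" unfolding adjoin_def using l by blast
qed

lemma g_in_adjoin: "g \<in> adjoin L g"
proof -
  have "g = \<one> \<otimes> g [^] (1::nat)" using gK by (simp add: K_closed)
  then show ?thesis unfolding adjoin_def using subgroup.one_closed[OF L] by blast
qed

lemma adjoin_subset_K: "adjoin L g \<subseteq> K"
  unfolding adjoin_def using LK K_mult subgroup_nat_pow_closed[OF K_subgroup gK] by blast

context
  fixes \<chi> z
  assumes chi: "\<chi> \<in> characters L" and z: "z ^ rel_order L g = \<chi> (g [^] rel_order L g)"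
begin

text \<open>The extension is well defined: two representations \<open>l g\<^sup>j = l' g\<^sup>j'\<close> differ by a multiple of
  the relative order in the exponent, where \<open>z\<close> and \<open>g\<close> are compatible with \<open>\<chi>\<close>.\<close>
lemma extend_char_well_defined_le:
  assumes l: "l \<in> L" and l': "l' \<in> L" and jj: "j \<le> j'"
    and eq: "l \<otimes> g [^] (j::nat) = l' \<otimes> g [^] (j'::nat)"
  shows "\<chi> l * z ^ j = \<chi> l' * z ^ j'"
proof -
  define n where "n = rel_order L g"
  define d where "d = j' - j"
  have gc: "g \<in> carrier G" using gK by (rule K_closed)
  have j': "j' = d + j" unfolding d_def using jj by simp
  have "l \<otimes> g [^] j = (l' \<otimes> g [^] d) \<otimes> g [^] j"
    using eq unfolding j' using L_closed[OF l'] gc by (simp add: m_assoc nat_pow_mult)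
  then have ll: "l = l' \<otimes> g [^] d" using L_closed[OF l] L_closed[OF l'] gc by simp
  then have "g [^] d = inv l' \<otimes> l" using L_closed[OF l'] gc by (simp add: m_assoc[symmetric])
  then have gd: "g [^] d \<in> L"
    using l l' by (simp add: subgroup.m_closed[OF L] subgroup.m_inv_closed[OF L])
  obtain q where dq: "d = n * q" using rel_order_dvd[OF L gc gd] unfolding n_def by blast
  have "\<chi> l = \<chi> l' * \<chi> (g [^] n) ^ q"
    unfolding ll dq using character_mult[OF chi l' gd[unfolded dq]] character_pow[OF chi L]
      rel_order(2)[OF L gc] by (simp add: nat_pow_pow[OF gc, symmetric] n_def)
  moreover have "z ^ j' = z ^ j * (z ^ n) ^ q" unfolding j' dq by (simp add: power_add power_mult)
  ultimately show ?thesis using z unfolding n_def by simp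
qed

lemma extend_char_apply:
  assumes l: "l \<in> L" shows "extend_char L g \<chi> z (l \<otimes> g [^] (j::nat)) = \<chi> l * z ^ j"
proof -
  let ?x = "l \<otimes> g [^] j"
  define P where "P r \<longleftrightarrow> (\<exists>l'\<in>L. \<exists>j'::nat. ?x = l' \<otimes> g [^] j' \<and> r = \<chi> l' * z ^ j')" for r
  have "P (\<chi> l * z ^ j)" unfolding P_def using l by blast
  then have "P (SOME r. P r)" by (rule someI)
  then obtain l' j' where l': "l' \<in> L" "?x = l' \<otimes> g [^] j'" "(SOME r. P r) = \<chi> l' * z ^ j'"
    unfolding P_def by blast
  have "\<chi> l * z ^ j = \<chi> l' * z ^ j'"
    using extend_char_well_defined_le[OF l l'(1) _ l'(2)]
      extend_char_well_defined_le[OF l'(1) l _ l'(2)[symmetric]] by (cases "j \<le> j'") auto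
  moreover have "?x \<in> adjoin L g" unfolding adjoin_def using l by blast
  ultimately show ?thesis using l'(3) unfolding extend_char_def P_def by simp
qed

lemma extend_char_character: "extend_char L g \<chi> z \<in> characters (adjoin L g)"
  unfolding characters_def
proof (intro CollectI conjI ballI allI impI)
  show "extend_char L g \<chi> z \<one> = 1"
    using extend_char_apply[OF subgroup.one_closed[OF L], of 0] character_one[OF chi] by simp
next
  fix x y assume "x \<in> adjoin L g" "y \<in> adjoin L g"
  then obtain l l' j k where l: "l \<in> L" "x = l \<otimes> g [^] (j::nat)" and l': "l' \<in> L" "y = l' \<otimes> g [^] (k::nat)"
    unfolding adjoin_def by blast
  then show "extend_char L g \<chi> z (x \<otimes> y) = extend_char L g \<chi> z x * extend_char L g \<chi> z y"
    by (simp add: adjoin_mult extend_char_apply subgroup.m_closed[OF L] character_mult[OF chi] power_add)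
next
  fix x assume "x \<notin> adjoin L g"
  then show "extend_char L g \<chi> z x = 0" unfolding extend_char_def by simp
qed

lemma extend_char_on_L: "l \<in> L \<Longrightarrow> extend_char L g \<chi> z l = \<chi> l"
  using extend_char_apply[of l 0] L_closed[of l] by simp

lemma extend_char_at_g: "extend_char L g \<chi> z g = z"
  using extend_char_apply[OF subgroup.one_closed[OF L], of 1] gK character_one[OF chi]
  by (simp add: K_closed)

end

text \<open>Every value \<open>\<chi>(g\<^sup>n) \<noteq> 0\<close> has an \<open>n\<close>-th root, so the extension step can always be made.\<close>
lemma exists_extend_char:
  assumes chi: "\<chi> \<in> characters L"
  obtains z where "z ^ rel_order L g = \<chi> (g [^] rel_order L g)"
proof -
  let ?n = "rel_order L g"
  have "\<chi> (g [^] ?n) \<noteq> 0" using character_nonzero[OF chi L rel_order(2)[OF L K_closed[OF gK]]] .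
  then have "card {z. z ^ ?n = \<chi> (g [^] ?n)} = ?n"
    using rel_order(1)[OF L K_closed[OF gK]] by (rule card_nth_roots)
  then have "{z. z ^ ?n = \<chi> (g [^] ?n)} \<noteq> {}"
    using rel_order(1)[OF L K_closed[OF gK]] by (metis card.empty less_irrefl)
  then show ?thesis using that by blast
qed

end

lemma character_extension:
  assumes "subgroup L G" "L \<subseteq> K" "\<chi> \<in> characters L"
  shows "\<exists>\<chi>'\<in>characters K. \<forall>l\<in>L. \<chi>' l = \<chi> l"
  using assms
proof (induction "card (K - L)" arbitrary: L \<chi> rule: less_induct)
  case less
  show ?case
  proof (cases "K \<subseteq> L")
    case True
    then show ?thesis using less.prems by (metis subset_antisym)
  next
    case False
    then obtain g where g: "g \<in> K" "g \<notin> L" by blast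
    note adjoin = adjoin_subgroup[OF less.prems(1,2) g(1)] adjoin_subset_K[OF less.prems(1,2) g(1)]
      L_subset_adjoin[OF less.prems(1,2) g(1)]
    obtain z where z: "z ^ rel_order L g = \<chi> (g [^] rel_order L g)"
      using exists_extend_char[OF less.prems(1,2) g(1) less.prems(3)] .
    have "K - adjoin L g \<subset> K - L"
      using adjoin g_in_adjoin[OF less.prems(1,2) g(1)] g by blast
    then have "card (K - adjoin L g) < card (K - L)"
      using K_finite by (intro psubset_card_mono) auto
    then obtain \<chi>' where \<chi>': "\<chi>' \<in> characters K" "\<forall>l\<in>adjoin L g. \<chi>' l = extend_char L g \<chi> z l"
      using less.hyps adjoin extend_char_character[OF less.prems(1,2) g(1) less.prems(3) z] by blast
    have "\<forall>l\<in>L. \<chi>' l = \<chi> l"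
      using \<chi>'(2) adjoin(3) extend_char_on_L[OF less.prems(1,2) g(1) less.prems(3) z] by auto
    then show ?thesis using \<chi>'(1) by blast
  qed
qed

text \<open>Characters separate the points of \<open>K\<close>: extend a nontrivial root of unity on \<open>\<langle>g\<rangle>\<close>.\<close>
lemma characters_separate:
  assumes g: "g \<in> K" and g1: "g \<noteq> \<one>"
  shows "\<exists>\<chi>\<in>characters K. \<chi> g \<noteq> 1"
proof -
  have L: "subgroup {\<one>} G" by (rule triv_subgroup)
  have LK: "{\<one>} \<subseteq> K" using K_one by simp
  define \<chi>0 where "\<chi>0 = (\<lambda>x. if x = \<one> then (1::complex) else 0)"
  have chi0: "\<chi>0 \<in> characters {\<one>}" unfolding characters_def \<chi>0_def by simp
  define n where "n = rel_order {\<one>} g"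
  have n: "0 < n" "g [^] n = \<one>" using rel_order[OF L K_closed[OF g]] unfolding n_def by auto
  have "n \<noteq> 1" using n(2) g1 g by (auto simp: K_closed)
  moreover have "card {z::complex. z ^ n = 1} = n" using n(1) by (simp add: card_nth_roots)
  ultimately have "{z::complex. z ^ n = 1} \<noteq> {1}" by auto
  then obtain z :: complex where z: "z ^ n = 1" "z \<noteq> 1" by auto
  have z': "z ^ rel_order {\<one>} g = \<chi>0 (g [^] rel_order {\<one>} g)"
    using z n unfolding n_def \<chi>0_def by simp
  obtain \<chi> where "\<chi> \<in> characters K" "\<forall>l\<in>adjoin {\<one>} g. \<chi> l = extend_char {\<one>} g \<chi>0 z l"
    using character_extension[OF adjoin_subgroup[OF L LK g] adjoin_subset_K[OF L LK g]
        extend_char_character[OF L LK g chi0 z']] by blast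
  moreover have "\<chi> g = z"
    using calculation(2) g_in_adjoin[OF L LK g] extend_char_at_g[OF L LK g chi0 z'] by simp
  ultimately show ?thesis using z(2) by blast
qed

lemma character_root_of_unity:
  assumes chi: "\<chi> \<in> characters K" and k: "k \<in> K"
  shows "\<chi> k ^ card K = 1"
proof -
  have "(\<Prod>x\<in>K. \<chi> (k \<otimes> x)) = (\<Prod>x\<in>K. \<chi> x)"
    by (rule prod.reindex_bij_witness[where i="\<lambda>x. inv k \<otimes> x" and j="\<lambda>x. k \<otimes> x"])
       (use k in \<open>auto simp: K_mult K_inv K_closed m_assoc[symmetric]\<close>)
  also have "(\<Prod>x\<in>K. \<chi> (k \<otimes> x)) = \<chi> k ^ card K * (\<Prod>x\<in>K. \<chi> x)"
    using character_mult[OF chi k] by (simp add: prod.distrib)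
  finally show ?thesis
    using K_finite character_nonzero[OF chi K_subgroup] by (simp add: prod_zero_iff)
qed

lemma finite_characters: "finite (characters K)"
proof -
  let ?R = "{z::complex. z ^ card K = 1}"
  have "characters K \<subseteq> (\<lambda>f x. if x \<in> K then f x else 0) ` (PiE K (\<lambda>_. ?R))"
  proof
    fix \<chi> assume chi: "\<chi> \<in> characters K"
    have "\<chi> = (\<lambda>x. if x \<in> K then restrict \<chi> K x else 0)"
      using character_outside[OF chi] by (auto simp: fun_eq_iff)
    moreover have "restrict \<chi> K \<in> PiE K (\<lambda>_. ?R)" using character_root_of_unity[OF chi] by simp
    ultimately show "\<chi> \<in> (\<lambda>f x. if x \<in> K then f x else 0) ` (PiE K (\<lambda>_. ?R))" by blast
  qed
  moreover have "finite ((\<lambda>f x. if x \<in> K then f x else 0) ` (PiE K (\<lambda>_. ?R)))"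
    using K_finite card_K_pos by (intro finite_imageI finite_PiE finite_roots_unity) auto
  ultimately show ?thesis by (rule finite_subset)
qed

lemma card_characters_pos: "0 < card (characters K)"
proof -
  have "(\<lambda>x. if x \<in> K then 1 else 0) \<in> characters K"
    unfolding characters_def using K_one K_mult by auto
  then show ?thesis using finite_characters card_gt_0_iff by blast
qed

text \<open>Column orthogonality: summing \<open>\<chi>(g)\<close> over all characters gives zero unless \<open>g = \<one>\<close>,
  because multiplying by a character with \<open>\<chi>\<^sub>0(g) \<noteq> 1\<close> permutes the characters.\<close>
lemma sum_characters:
  assumes g: "g \<in> K"
  shows "(\<Sum>\<chi>\<in>characters K. \<chi> g) = (if g = \<one> then of_nat (card (characters K)) else 0)"
proof (cases "g = \<one>")
  case True
  then show ?thesis by (simp add: character_one)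
next
  case False
  obtain \<chi>0 where chi0: "\<chi>0 \<in> characters K" "\<chi>0 g \<noteq> 1" using characters_separate[OF g False] by blast
  have nz: "x \<in> K \<Longrightarrow> \<chi>0 x \<noteq> 0" for x by (rule character_nonzero[OF chi0(1) K_subgroup])
  have "(\<Sum>\<chi>\<in>characters K. \<chi>0 g * \<chi> g) = (\<Sum>\<chi>\<in>characters K. \<chi> g)"
  proof (rule sum.reindex_bij_witness[where i="\<lambda>\<chi> x. inverse (\<chi>0 x) * \<chi> x" and j="\<lambda>\<chi> x. \<chi>0 x * \<chi> x"])
    fix \<chi> assume chi: "\<chi> \<in> characters K"
    have "inverse (\<chi>0 x) * (\<chi>0 x * \<chi> x) = \<chi> x" "\<chi>0 x * (inverse (\<chi>0 x) * \<chi> x) = \<chi> x" for x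
      using nz[of x] character_outside[OF chi, of x] by (cases "x \<in> K"; simp)+
    then show "(\<lambda>x. inverse (\<chi>0 x) * (\<chi>0 x * \<chi> x)) = \<chi>" "(\<lambda>x. \<chi>0 x * (inverse (\<chi>0 x) * \<chi> x)) = \<chi>"
      by auto
    show "(\<lambda>x. \<chi>0 x * \<chi> x) \<in> characters K" "(\<lambda>x. inverse (\<chi>0 x) * \<chi> x) \<in> characters K"
      using chi chi0(1) unfolding characters_def by (auto simp: inverse_mult_distrib)
  qed simp
  then have "\<chi>0 g * (\<Sum>\<chi>\<in>characters K. \<chi> g) = (\<Sum>\<chi>\<in>characters K. \<chi> g)"
    by (simp add: sum_distrib_left)
  then have "(\<chi>0 g - 1) * (\<Sum>\<chi>\<in>characters K. \<chi> g) = 0"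
    by (simp add: algebra_simps)
  then show ?thesis using chi0(2) False by simp
qed

definition char_idempotent :: "('g \<Rightarrow> complex) \<Rightarrow> 'g \<Rightarrow> complex" where
  "char_idempotent \<chi> = (\<lambda>x. if x \<in> K then \<chi> (inv x) / of_nat (card K) else 0)"

lemma char_idempotent_in_CK: "char_idempotent \<chi> \<in> ga_sub G K"
  by (simp add: ga_sub_def char_idempotent_def)

lemma char_idempotent_eigen:
  assumes chi: "\<chi> \<in> characters K" and k: "k \<in> K"
  shows "\<delta> k \<star> char_idempotent \<chi> = (\<lambda>x. \<chi> k * char_idempotent \<chi> x)"
proof (rule ext)
  fix x
  have mem: "inv k \<otimes> x \<in> K \<longleftrightarrow> x \<in> K" if "x \<in> carrier G"
    using that k K_mult[OF k] K_mult[OF K_inv[OF k]] by (force simp: K_closed m_assoc[symmetric])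
  have "x \<in> K \<Longrightarrow> \<chi> (inv (inv k \<otimes> x)) = \<chi> k * \<chi> (inv x)"
    using character_mult[OF chi K_inv k] k by (simp add: inv_mult_group K_closed K_inv mult.commute)
  then show "(\<delta> k \<star> char_idempotent \<chi>) x = \<chi> k * char_idempotent \<chi> x"
    using mem K_closed k by (auto simp: delta_conv char_idempotent_def)
qed

lemma char_idempotent_idem:
  assumes chi: "\<chi> \<in> characters K"
  shows "char_idempotent \<chi> \<star> char_idempotent \<chi> = char_idempotent \<chi>"
proof -
  have "(\<Sum>k\<in>K. char_idempotent \<chi> k * \<chi> k) = (\<Sum>k\<in>K. 1 / of_nat (card K))"
    using character_inv[OF chi K_subgroup] by (intro sum.cong) (auto simp: char_idempotent_def K_inv mult.commute)
  also have "\<dots> = 1" using card_K_pos by simp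
  finally show ?thesis
    using conv_eigenvector[OF char_idempotent_in_CK char_idempotent_eigen[OF chi]] by simp
qed

lemma char_idempotent_eigen_idempotent:
  assumes chi: "\<chi> \<in> characters K" shows "eigen_idempotent K (char_idempotent \<chi>)"
proof -
  have "char_idempotent \<chi> \<one> \<noteq> 0"
    using K_one card_K_pos character_one[OF chi] by (simp add: char_idempotent_def)
  then show ?thesis
    unfolding eigen_idempotent_def
    using char_idempotent_in_CK char_idempotent_idem[OF chi] char_idempotent_eigen[OF chi] by fastforce
qed

lemma char_idempotent_inj: "inj_on char_idempotent (characters K)"
proof (rule inj_onI, rule ext)
  fix \<chi> \<chi>' k assume chi: "\<chi> \<in> characters K" "\<chi>' \<in> characters K"
    and eq: "char_idempotent \<chi> = char_idempotent \<chi>'"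
  show "\<chi> k = \<chi>' k"
  proof (cases "k \<in> K")
    case True
    then show ?thesis
      using fun_cong[OF eq, of "inv k"] card_K_pos by (simp add: char_idempotent_def K_inv K_closed)
  qed (simp add: character_outside[OF chi(1)] character_outside[OF chi(2)])
qed

lemma delta_in_char_span:
  assumes k: "k \<in> K"
  shows "\<delta> k = (\<lambda>x. \<Sum>\<chi>\<in>characters K.
                    (of_nat (card K) / of_nat (card (characters K)) * \<chi> k) * char_idempotent \<chi> x)"
proof (rule ext)
  fix x
  show "\<delta> k x = (\<Sum>\<chi>\<in>characters K.
                  (of_nat (card K) / of_nat (card (characters K)) * \<chi> k) * char_idempotent \<chi> x)"
  proof (cases "x \<in> K")
    case True
    have "(\<Sum>\<chi>\<in>characters K. (of_nat (card K) / of_nat (card (characters K)) * \<chi> k) * char_idempotent \<chi> x)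
        = (\<Sum>\<chi>\<in>characters K. \<chi> (k \<otimes> inv x)) / of_nat (card (characters K))"
      unfolding sum_divide_distrib
      using character_mult[OF _ k K_inv[OF True]] True card_K_pos
      by (intro sum.cong) (simp_all add: char_idempotent_def)
    also have "\<dots> = (if k \<otimes> inv x = \<one> then 1 else 0)"
      using sum_characters[OF K_mult[OF k K_inv[OF True]]] card_characters_pos by simp
    also have "(k \<otimes> inv x = \<one>) = (x = k)"
      using K_closed[OF k] K_closed[OF True] by (metis inv_closed inv_equality inv_inv r_inv)
    finally show ?thesis by (simp add: ga_delta_def eq_commute)
  next
    case False
    then show ?thesis using k by (auto simp: ga_delta_def char_idempotent_def)
  qed
qed

definition is_idem_eigenbasis :: "('g \<Rightarrow> complex) set \<Rightarrow> bool" where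
  "is_idem_eigenbasis B \<longleftrightarrow> ga_basis G K B \<and>
     (\<forall>b\<in>B. \<forall>a\<in>ga_sub G K. \<exists>\<mu>. a \<star> b = (\<lambda>x. \<mu> * b x)) \<and>
     (\<forall>b\<in>B. b \<star> b = b) \<and>
     (\<forall>b\<in>B. \<forall>b'\<in>B. b \<noteq> b' \<longrightarrow> b \<star> b' = zero_ga)"

text \<open>Basis vectors are nonzero, so every member of such a basis is an eigen-idempotent.\<close>
lemma is_idem_eigenbasis_members:
  assumes B: "is_idem_eigenbasis B" and b: "b \<in> B"
  shows "eigen_idempotent K b"
proof -
  have fB: "finite B" and indep: "\<And>f. (\<lambda>x. \<Sum>b\<in>B. f b * b x) = zero_ga \<Longrightarrow> \<forall>b\<in>B. f b = 0"
    using B unfolding is_idem_eigenbasis_def ga_basis_def by auto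
  have select: "(\<lambda>x. \<Sum>b'\<in>B. (if b' = b then 1 else 0) * b' x) = b"
  proof (rule ext)
    fix x
    have "(\<Sum>b'\<in>B. (if b' = b then 1 else 0) * b' x) = (\<Sum>b'\<in>B. if b' = b then b x else 0)"
      by (rule sum.cong) auto
    then show "(\<Sum>b'\<in>B. (if b' = b then 1 else 0) * b' x) = b x" using fB b by simp
  qed
  have "b \<noteq> zero_ga"
  proof
    assume "b = zero_ga"
    then have "\<forall>b'\<in>B. (if b' = b then 1 else 0) = (0::complex)"
      using select by (intro indep) argo
    then show False using b by (metis one_neq_zero)
  qed
  then show ?thesis
    using B b delta_in_CK unfolding is_idem_eigenbasis_def ga_basis_def eigen_idempotent_def by blast
qed

text \<open>An eigen-idempotent is orthogonal to every other member of an idempotent eigenbasis, so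
  it must itself be a member: any two such bases coincide.\<close>
lemma is_idem_eigenbasis_contains:
  assumes B: "is_idem_eigenbasis B" and b: "eigen_idempotent K b"
  shows "b \<in> B"
proof (rule ccontr)
  assume nb: "b \<notin> B"
  have "b \<in> ga_sub G K" using b unfolding eigen_idempotent_def by simp
  then obtain f where f: "b = (\<lambda>x. \<Sum>b'\<in>B. f b' * b' x)"
    using B unfolding is_idem_eigenbasis_def ga_basis_def by blast
  have "b \<star> b = (\<lambda>x. \<Sum>b'\<in>B. f b' * (b' \<star> b) x)"
    by (subst (1) f) (rule conv_lincomb_left)
  also have "\<dots> = zero_ga"
  proof (rule ext, rule sum.neutral, rule ballI)
    fix x b' assume b': "b' \<in> B"
    then have "b' \<star> b = zero_ga"
      using eigen_idempotents_orthogonal[OF is_idem_eigenbasis_members[OF B b'] b] nb by blast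
    then show "f b' * (b' \<star> b) x = 0" by simp
  qed
  finally show False using b unfolding eigen_idempotent_def by simp
qed

text \<open>Orthogonal nonzero idempotents are linearly independent.\<close>
lemma char_idempotents_independent:
  assumes s: "(\<lambda>x. \<Sum>b\<in>char_idempotent ` characters K. f b * b x) = zero_ga"
    and b: "b \<in> char_idempotent ` characters K"
  shows "f b = 0"
proof -
  have eig: "eigen_idempotent K b" using b char_idempotent_eigen_idempotent by blast
  have ortho: "b' \<star> b = (if b' = b then b else zero_ga)" if b': "b' \<in> char_idempotent ` characters K" for b'
  proof (cases "b' = b")
    case False
    obtain \<chi>' where "\<chi>' \<in> characters K" "b' = char_idempotent \<chi>'" using b' by blast
    then have "eigen_idempotent K b'" using char_idempotent_eigen_idempotent by simp
    then show ?thesis using eigen_idempotents_orthogonal[OF _ eig False] False by simp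
  qed (use eig in \<open>simp add: eigen_idempotent_def\<close>)
  have "(\<lambda>x. f b * b x) = (\<lambda>x. \<Sum>b'\<in>char_idempotent ` characters K. if b' = b then f b * b x else 0)"
    using finite_characters b by simp
  also have "\<dots> = (\<lambda>x. \<Sum>b'\<in>char_idempotent ` characters K. f b' * (b' \<star> b) x)"
  proof (intro ext sum.cong refl)
    fix x b' assume "b' \<in> char_idempotent ` characters K"
    then show "(if b' = b then f b * b x else 0) = f b' * (b' \<star> b) x" using ortho[of b'] by simp
  qed
  also have "\<dots> = (\<lambda>x. \<Sum>b'\<in>char_idempotent ` characters K. f b' * b' x) \<star> b"
    by (rule conv_lincomb_left[symmetric])
  finally have zero: "(\<lambda>x. f b * b x) = zero_ga" unfolding s by simp
  obtain x where "b x \<noteq> 0" using eig unfolding eigen_idempotent_def by auto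
  then show "f b = 0" using fun_cong[OF zero, of x] by simp
qed

text \<open>By Fourier inversion the character idempotents span \<open>\<complex>[K]\<close>.\<close>
lemma char_idempotents_span:
  assumes a: "a \<in> ga_sub G K"
  shows "\<exists>f. a = (\<lambda>x. \<Sum>b\<in>char_idempotent ` characters K. f b * b x)"
proof -
  define c :: complex where "c = of_nat (card K) / of_nat (card (characters K))"
  define coeff where "coeff \<chi> = (\<Sum>k\<in>K. a k * (c * \<chi> k))" for \<chi>
  have "a = (\<lambda>x. \<Sum>\<chi>\<in>characters K. coeff \<chi> * char_idempotent \<chi> x)"
  proof (rule ext)
    fix x
    have "a x = (\<Sum>k\<in>K. a k * \<delta> k x)" using fun_cong[OF delta_expansion[OF a K_carrier]] .
    also have "\<dots> = (\<Sum>k\<in>K. a k * (\<Sum>\<chi>\<in>characters K. (c * \<chi> k) * char_idempotent \<chi> x))"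
      by (rule sum.cong[OF refl]) (simp only: c_def delta_in_char_span)
    also have "\<dots> = (\<Sum>k\<in>K. \<Sum>\<chi>\<in>characters K. a k * ((c * \<chi> k) * char_idempotent \<chi> x))"
      by (simp only: sum_distrib_left)
    also have "\<dots> = (\<Sum>\<chi>\<in>characters K. \<Sum>k\<in>K. a k * ((c * \<chi> k) * char_idempotent \<chi> x))"
      by (rule sum.swap)
    also have "\<dots> = (\<Sum>\<chi>\<in>characters K. coeff \<chi> * char_idempotent \<chi> x)"
      by (simp only: coeff_def sum_distrib_right mult.assoc)
    finally show "a x = (\<Sum>\<chi>\<in>characters K. coeff \<chi> * char_idempotent \<chi> x)" .
  qed
  also have "\<dots> = (\<lambda>x. \<Sum>b\<in>char_idempotent ` characters K.
                        coeff (the_inv_into (characters K) char_idempotent b) * b x)"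
    by (simp add: sum.reindex[OF char_idempotent_inj] the_inv_into_f_f[OF char_idempotent_inj])
  finally have "a = (\<lambda>x. \<Sum>b\<in>char_idempotent ` characters K.
                        coeff (the_inv_into (characters K) char_idempotent b) * b x)" .
  then show ?thesis by (intro exI[of _ "\<lambda>b. coeff (the_inv_into (characters K) char_idempotent b)"])
qed

lemma char_idempotents_idem_eigenbasis: "is_idem_eigenbasis (char_idempotent ` characters K)"
  unfolding is_idem_eigenbasis_def ga_basis_def
  using finite_characters char_idempotent_in_CK char_idempotents_independent char_idempotents_span
    conv_eigenvector[OF _ char_idempotent_eigen] char_idempotent_idem
    eigen_idempotents_orthogonal[OF char_idempotent_eigen_idempotent char_idempotent_eigen_idempotent]
  by blast

text \<open>Hence \<open>idem_eigenbasis G K\<close> is well defined, and its members are eigen-idempotents.\<close>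
theorem idem_eigenbasis_eigen_idempotent:
  assumes "b \<in> idem_eigenbasis G K"
  shows "eigen_idempotent K b"
proof -
  let ?C = "char_idempotent ` characters K"
  have "\<exists>!B. is_idem_eigenbasis B"
  proof (rule ex1I[of _ ?C])
    show "is_idem_eigenbasis ?C" by (rule char_idempotents_idem_eigenbasis)
    fix B assume B: "is_idem_eigenbasis B"
    show "B = ?C"
    proof (rule subset_antisym; rule subsetI)
      fix b assume "b \<in> B"
      then show "b \<in> ?C" using is_idem_eigenbasis_contains[OF char_idempotents_idem_eigenbasis]
          is_idem_eigenbasis_members[OF B] by blast
    next
      fix b assume "b \<in> ?C"
      then show "b \<in> B" using is_idem_eigenbasis_contains[OF B]
          is_idem_eigenbasis_members[OF char_idempotents_idem_eigenbasis] by blast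
    qed
  qed
  then have "is_idem_eigenbasis (idem_eigenbasis G K)"
    unfolding idem_eigenbasis_def is_idem_eigenbasis_def[symmetric] by (rule theI')
  then show ?thesis using assms by (rule is_idem_eigenbasis_members)
qed

end

section \<open>The block of an orbit in \<open>\<complex>[N \<rtimes> H]\<close>\<close>

locale orbit_block = group_algebra G for G :: "('g, 'b) monoid_scheme" (structure) +
  fixes N H :: "'g set" and v u :: "'g \<Rightarrow> complex" and hs :: "nat \<Rightarrow> 'g"
    and Orb :: "('g \<Rightarrow> complex) set" and H\<alpha> :: "'g set" and c :: nat
    and vs w :: "nat \<Rightarrow> 'g \<Rightarrow> complex" and e :: "nat \<Rightarrow> nat \<Rightarrow> 'g \<Rightarrow> complex"
    and J :: "'g \<Rightarrow> complex" and A :: "('g \<Rightarrow> complex) set"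
  assumes N_normal: "N \<lhd> G" and H_subgroup: "subgroup H G"
    and N_comm: "\<forall>x\<in>N. \<forall>y\<in>N. x \<otimes> y = y \<otimes> x"
    and H_comm: "\<forall>x\<in>H. \<forall>y\<in>H. x \<otimes> y = y \<otimes> x"
    and N_inter_H: "N \<inter> H = {\<one>}"
    and N_times_H: "N <#> H = carrier G"
    and v_in: "v \<in> idem_eigenbasis G N"
    and Orb_def: "Orb = {ga_conj G h v | h. h \<in> H}"
    and H\<alpha>_def: "H\<alpha> = {h \<in> H. \<forall>x\<in>Orb. ga_conj G h x = x}"
    and c_def: "c = card Orb"
    and u_in: "u \<in> idem_eigenbasis G H\<alpha>"
    and hs_in: "\<forall>i<c. hs i \<in> H"
    and hs_reps: "bij_betw (\<lambda>i. H\<alpha> #> hs i) {..<c} ((\<lambda>h. H\<alpha> #> h) ` H)"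
    and vs_def: "vs = (\<lambda>i. ga_conj G (hs i) v)"
    and w_def: "w = (\<lambda>i. vs i \<star> u)"
    and e_def: "e = (\<lambda>i j. (w i \<star> \<delta> (hs i \<otimes> inv (hs j))) \<star> w j)"
    and J_def: "J = (\<lambda>x. \<Sum>i<c. w i x)"
    and A_def: "A = {a \<star> J | a. a \<in> CG}"
begin

lemma N_subgroup: "subgroup N G" by (rule normal_imp_subgroup[OF N_normal])
lemma N_closed: "n \<in> N \<Longrightarrow> n \<in> carrier G" by (rule subgroup.mem_carrier[OF N_subgroup])
lemma H_closed: "h \<in> H \<Longrightarrow> h \<in> carrier G" by (rule subgroup.mem_carrier[OF H_subgroup])
lemma H_mult: "x \<in> H \<Longrightarrow> y \<in> H \<Longrightarrow> x \<otimes> y \<in> H" by (rule subgroup.m_closed[OF H_subgroup])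
lemma H_inv: "x \<in> H \<Longrightarrow> inv x \<in> H" by (rule subgroup.m_inv_closed[OF H_subgroup])
lemma hs_H: "i < c \<Longrightarrow> hs i \<in> H" using hs_in by blast
lemma hs_closed: "i < c \<Longrightarrow> hs i \<in> carrier G" using H_closed hs_H by blast
lemma hs_quotient_H: "i < c \<Longrightarrow> j < c \<Longrightarrow> hs i \<otimes> inv (hs j) \<in> H"
  using H_mult H_inv hs_H by blast

interpretation N: abelian_subgroup_algebra G N
  by (rule abelian_subgroup_algebra.intro[OF group_algebra_axioms])
     (simp add: abelian_subgroup_algebra_axioms_def N_subgroup N_comm)

lemma v_eigen: "eigen_idempotent N v"
  by (rule N.idem_eigenbasis_eigen_idempotent[OF v_in])

lemma v_in_CG: "v \<in> CG"
  using v_eigen ga_sub_in_CG subgroup.subset[OF N_subgroup] by (auto simp: eigen_idempotent_def)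

lemma conj_v_eigen: "h \<in> H \<Longrightarrow> eigen_idempotent N (ga_conj G h v)"
  by (rule eigen_idempotent_conj[OF N_normal H_closed v_eigen])

lemma conj_v_idem: "h \<in> H \<Longrightarrow> ga_conj G h v \<star> ga_conj G h v = ga_conj G h v"
  using conj_v_eigen by (simp add: eigen_idempotent_def)

lemma H\<alpha>_subset_H: "H\<alpha> \<subseteq> H" unfolding H\<alpha>_def by blast

lemma H\<alpha>_closed: "s \<in> H\<alpha> \<Longrightarrow> s \<in> carrier G" using H\<alpha>_subset_H H_closed by blast

lemma H\<alpha>_fixes: "s \<in> H\<alpha> \<Longrightarrow> h \<in> H \<Longrightarrow> ga_conj G s (ga_conj G h v) = ga_conj G h v"
  unfolding H\<alpha>_def Orb_def by blast

text \<open>Since \<open>H\<close> is abelian, fixing one point of the orbit is the same as fixing all of them.\<close>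
lemma H\<alpha>_iff:
  assumes h: "h \<in> H"
  shows "h \<in> H\<alpha> \<longleftrightarrow> ga_conj G h v = v"
proof
  assume fix_v: "ga_conj G h v = v"
  have "ga_conj G h (ga_conj G t v) = ga_conj G t v" if t: "t \<in> H" for t
  proof -
    have "h \<otimes> t = t \<otimes> h" using H_comm h t by blast
    then have "ga_conj G h (ga_conj G t v) = ga_conj G t (ga_conj G h v)"
      using h t by (simp add: ga_conj_comp H_closed)
    then show ?thesis using fix_v by simp
  qed
  then show "h \<in> H\<alpha>" unfolding H\<alpha>_def Orb_def using h by blast
qed (use H\<alpha>_fixes[of h \<one>] subgroup.one_closed[OF H_subgroup] v_in_CG in \<open>simp add: ga_conj_one\<close>)

lemma H\<alpha>_subgroup: "subgroup H\<alpha> G"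
proof (rule subgroupI)
  show "H\<alpha> \<subseteq> carrier G" using H\<alpha>_closed by blast
  show "H\<alpha> \<noteq> {}"
    using H\<alpha>_iff[OF subgroup.one_closed[OF H_subgroup]] v_in_CG by (auto simp: ga_conj_one)
next
  fix a assume a: "a \<in> H\<alpha>"
  then have "ga_conj G (inv a) v = ga_conj G (inv a) (ga_conj G a v)"
    using H\<alpha>_iff H\<alpha>_subset_H by auto
  then show "inv a \<in> H\<alpha>"
    using a H\<alpha>_iff H\<alpha>_subset_H H_inv ga_conj_inv[OF H\<alpha>_closed[OF a] v_in_CG] by auto
next
  fix a b assume a: "a \<in> H\<alpha>" and b: "b \<in> H\<alpha>"
  then have "a \<in> H" "b \<in> H" using H\<alpha>_subset_H by auto
  moreover have "ga_conj G (a \<otimes> b) v = ga_conj G a (ga_conj G b v)"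
    using a b by (simp add: ga_conj_comp H\<alpha>_closed)
  ultimately show "a \<otimes> b \<in> H\<alpha>" using a b H\<alpha>_iff H_mult by simp
qed

interpretation H\<alpha>: abelian_subgroup_algebra G H\<alpha>
  by (rule abelian_subgroup_algebra.intro[OF group_algebra_axioms])
     (use H\<alpha>_subgroup H\<alpha>_subset_H H_comm in \<open>auto simp: abelian_subgroup_algebra_axioms_def\<close>)

lemma u_eigen: "eigen_idempotent H\<alpha> u"
  by (rule H\<alpha>.idem_eigenbasis_eigen_idempotent[OF u_in])

lemma conj_v_eq_iff:
  assumes h: "h \<in> H" and h': "h' \<in> H"
  shows "ga_conj G h v = ga_conj G h' v \<longleftrightarrow> H\<alpha> #> h = H\<alpha> #> h'"
proof -
  have hc: "h \<in> carrier G" and h'c: "h' \<in> carrier G" using h h' by (simp_all add: H_closed)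
  have "ga_conj G h v = ga_conj G h' v \<longleftrightarrow> ga_conj G (inv h' \<otimes> h) v = v"
  proof
    assume "ga_conj G h v = ga_conj G h' v"
    then show "ga_conj G (inv h' \<otimes> h) v = v"
      using ga_conj_inv[OF h'c v_in_CG] hc h'c by (simp add: ga_conj_comp[symmetric])
  next
    assume "ga_conj G (inv h' \<otimes> h) v = v"
    then show "ga_conj G h v = ga_conj G h' v"
      using ga_conj_comp[of h' "inv h' \<otimes> h" v] hc h'c by simp
  qed
  also have "\<dots> \<longleftrightarrow> h \<otimes> inv h' \<in> H\<alpha>"
  proof -
    have "inv h' \<otimes> h = h \<otimes> inv h'" using H_comm H_inv[OF h'] h by blast
    then show ?thesis using H\<alpha>_iff[OF H_mult[OF H_inv[OF h'] h]] by simp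
  qed
  also have "\<dots> \<longleftrightarrow> h \<in> H\<alpha> #> h'"
    by (rule subgroup.rcos_module[OF H\<alpha>_subgroup is_group h'c hc, symmetric])
  also have "\<dots> \<longleftrightarrow> H\<alpha> #> h = H\<alpha> #> h'"
    using repr_independence[OF _ h'c H\<alpha>_subgroup] rcos_self[OF hc H\<alpha>_subgroup] by auto
  finally show ?thesis .
qed

lemma vs_distinct: "i < c \<Longrightarrow> j < c \<Longrightarrow> i \<noteq> j \<Longrightarrow> vs i \<noteq> vs j"
  using conj_v_eq_iff[OF hs_H hs_H] bij_betw_imp_inj_on[OF hs_reps]
  unfolding vs_def inj_on_def by blast

lemma coset_decomposition:
  assumes h: "h \<in> H"
  obtains m where "m < c" "ga_conj G h v = vs m" "h \<otimes> inv (hs m) \<in> H\<alpha>"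
proof -
  have "H\<alpha> #> h \<in> (\<lambda>i. H\<alpha> #> hs i) ` {..<c}" using hs_reps h unfolding bij_betw_def by blast
  then obtain m where m: "m < c" "H\<alpha> #> h = H\<alpha> #> hs m" by auto
  then have "h \<in> H\<alpha> #> hs m" using rcos_self[OF H_closed[OF h] H\<alpha>_subgroup] by simp
  then have "h \<otimes> inv (hs m) \<in> H\<alpha>"
    using subgroup.rcos_module[OF H\<alpha>_subgroup is_group hs_closed[OF m(1)] H_closed[OF h]] by simp
  then show ?thesis using that m conj_v_eq_iff[OF h hs_H[OF m(1)]] unfolding vs_def by blast
qed

definition matrix_unit :: "nat \<Rightarrow> nat \<Rightarrow> 'g \<Rightarrow> complex" where
  "matrix_unit i j = vs i \<star> (\<delta> (hs i \<otimes> inv (hs j)) \<star> u)"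

lemma vs_conj: "vs i = ga_conj G (hs i) v" unfolding vs_def ..

lemma vs_idem: "i < c \<Longrightarrow> vs i \<star> vs i = vs i"
  unfolding vs_conj by (rule conj_v_idem[OF hs_H])

lemma vs_in_CN: "i < c \<Longrightarrow> vs i \<in> ga_sub G N"
  using conj_v_eigen[OF hs_H] unfolding vs_conj by (simp add: eigen_idempotent_def)

lemma delta_conj_v_swap:
  "g \<in> H \<Longrightarrow> h \<in> H \<Longrightarrow> \<delta> g \<star> ga_conj G h v = ga_conj G (g \<otimes> h) v \<star> \<delta> g"
  by (simp add: delta_conv_swap H_closed ga_conj_in_CG ga_conj_comp)

text \<open>\<open>u\<close> commutes with the conjugates of \<open>v\<close> (fixed by \<open>H\<alpha>\<close>) and with \<open>\<delta>\<^sub>h\<close>, \<open>h \<in> H\<close> (\<open>H\<close> abelian).\<close>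
lemma u_commute_conj_v: assumes h: "h \<in> H" shows "u \<star> ga_conj G h v = ga_conj G h v \<star> u"
proof (rule commute_by_deltas[OF _ H\<alpha>.K_carrier])
  show "u \<in> ga_sub G H\<alpha>" using u_eigen by (simp add: eigen_idempotent_def)
  fix s assume s: "s \<in> H\<alpha>"
  then have "ga_conj G (s \<otimes> h) v = ga_conj G h v"
    using h H\<alpha>_fixes[OF s h] by (simp add: ga_conj_comp[symmetric] H\<alpha>_closed H_closed)
  then show "\<delta> s \<star> ga_conj G h v = ga_conj G h v \<star> \<delta> s"
    using delta_conj_v_swap[OF _ h, of s] s H\<alpha>_subset_H by auto
qed

lemma u_commute_delta: assumes g: "g \<in> H" shows "u \<star> \<delta> g = \<delta> g \<star> u"
proof (rule commute_by_deltas[OF _ H\<alpha>.K_carrier])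
  show "u \<in> ga_sub G H\<alpha>" using u_eigen by (simp add: eigen_idempotent_def)
  fix s assume "s \<in> H\<alpha>"
  then have s: "s \<in> H" using H\<alpha>_subset_H by blast
  then have "s \<otimes> g = g \<otimes> s" using H_comm g by blast
  then show "\<delta> s \<star> \<delta> g = \<delta> g \<star> \<delta> s" using s g by (simp add: delta_delta H_closed)
qed

lemma u_absorbs: "g \<in> H \<Longrightarrow> u \<star> (\<delta> g \<star> u) = \<delta> g \<star> u"
  using u_eigen
  by (simp add: conv_assoc[symmetric] u_commute_delta) (simp add: conv_assoc eigen_idempotent_def)

lemma e_eq_matrix_unit: assumes i: "i < c" and j: "j < c" shows "e i j = matrix_unit i j"
proof -
  let ?g = "hs i \<otimes> inv (hs j)"
  have g: "?g \<in> H" by (rule hs_quotient_H[OF i j])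
  have "?g \<otimes> hs j = hs i" using hs_closed[OF i] hs_closed[OF j] by (simp add: m_assoc)
  then have swap: "\<delta> ?g \<star> vs j = vs i \<star> \<delta> ?g"
    unfolding vs_conj using delta_conj_v_swap[OF g hs_H[OF j]] by simp
  have "e i j = vs i \<star> (u \<star> (\<delta> ?g \<star> (vs j \<star> u)))" unfolding e_def w_def by (simp add: conv_assoc)
  also have "\<dots> = vs i \<star> (u \<star> (vs i \<star> (\<delta> ?g \<star> u)))" by (simp only: conv_swap_left[OF swap])
  also have "\<dots> = vs i \<star> (vs i \<star> (u \<star> (\<delta> ?g \<star> u)))"
    by (simp only: vs_conj conv_left_commute[OF u_commute_conj_v[OF hs_H[OF i]]])
  also have "\<dots> = matrix_unit i j"
    by (simp only: u_absorbs[OF g] conv_idem_left[OF vs_idem[OF i]] matrix_unit_def)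
  finally show ?thesis .
qed

text \<open>Moving \<open>\<delta>(h\<^sub>i h\<^sub>j\<^sup>-\<^sup>1)\<close> past \<open>v\<^sub>k\<close>
  turns it into a conjugate of \<open>v\<close> which equals \<open>v\<^sub>i\<close> when \<open>j = k\<close> and is orthogonal to \<open>v\<^sub>i\<close>
  otherwise.\<close>
lemma matrix_unit_mult:
  assumes i: "i < c" and j: "j < c" and k: "k < c" and l: "l < c"
  shows "matrix_unit i j \<star> matrix_unit k l = (if j = k then matrix_unit i l else zero_ga)"
proof -
  let ?g1 = "hs i \<otimes> inv (hs j)" and ?g2 = "hs k \<otimes> inv (hs l)"
  let ?X = "ga_conj G (?g1 \<otimes> hs k) v"
  have g1: "?g1 \<in> H" and g2: "?g2 \<in> H" by (simp_all add: hs_quotient_H i j k l)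
  have "matrix_unit i j \<star> matrix_unit k l = vs i \<star> (\<delta> ?g1 \<star> (u \<star> (vs k \<star> (\<delta> ?g2 \<star> u))))"
    unfolding matrix_unit_def by (simp add: conv_assoc)
  also have "\<dots> = vs i \<star> (\<delta> ?g1 \<star> (vs k \<star> (\<delta> ?g2 \<star> u)))"
    by (simp only: vs_conj conv_left_commute[OF u_commute_conj_v[OF hs_H[OF k]]] u_absorbs[OF g2])
  also have "\<dots> = vs i \<star> (?X \<star> (\<delta> ?g1 \<star> (\<delta> ?g2 \<star> u)))"
    by (simp only: vs_conj conv_swap_left[OF delta_conj_v_swap[OF g1 hs_H[OF k]]])
  finally have prod: "matrix_unit i j \<star> matrix_unit k l = vs i \<star> (?X \<star> (\<delta> ?g1 \<star> (\<delta> ?g2 \<star> u)))" .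
  show ?thesis
  proof (cases "j = k")
    case True
    have "?X = vs i" unfolding vs_conj True using hs_closed[OF i] hs_closed[OF k] by (simp add: m_assoc)
    moreover have "\<delta> ?g1 \<star> (\<delta> ?g2 \<star> u) = \<delta> (hs i \<otimes> inv (hs l)) \<star> u"
      using hs_closed i k l True by (simp add: delta_delta_conv m_assoc)
    ultimately show ?thesis
      unfolding prod using True conv_idem_left[OF vs_idem[OF i]] by (simp add: matrix_unit_def)
  next
    case False
    have "inv ?g1 \<otimes> hs i = hs j"
      using hs_closed[OF i] hs_closed[OF j] by (simp add: inv_mult_group m_assoc)
    then have "ga_conj G (inv ?g1) (vs i) = vs j"
      using H_closed[OF g1] hs_closed[OF i] by (simp add: vs_conj ga_conj_comp)
    moreover have "ga_conj G (inv ?g1) ?X = vs k"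
      using H_closed[OF g1] hs_closed[OF k] by (simp add: vs_conj ga_conj_comp)
    ultimately have "vs i \<noteq> ?X" using vs_distinct[OF j k False] by auto
    then have "vs i \<star> ?X = zero_ga" unfolding vs_conj
      by (rule N.eigen_idempotents_orthogonal[OF conj_v_eigen[OF hs_H[OF i]]
            conj_v_eigen[OF H_mult[OF g1 hs_H[OF k]]]])
    then show ?thesis unfolding prod using False by (simp add: conv_assoc[symmetric])
  qed
qed

lemma u_in_CG: "u \<in> CG"
  using u_eigen ga_sub_in_CG H\<alpha>.K_carrier by (auto simp: eigen_idempotent_def)

lemma matrix_unit_diag: assumes i: "i < c" shows "matrix_unit i i = vs i \<star> u"
  unfolding matrix_unit_def using hs_closed[OF i] u_in_CG by (simp add: delta_one_conv)
text \<open>\<open>E\<^sub>i\<^sub>j \<noteq> 0\<close>: otherwise \<open>E\<^sub>i\<^sub>i = E\<^sub>i\<^sub>j E\<^sub>j\<^sub>i = 0\<close>, but \<open>(v\<^sub>i u)(n s) = v\<^sub>i(n) u(s)\<close> on \<open>N H\<alpha>\<close>.\<close>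
lemma matrix_unit_nonzero: assumes i: "i < c" and j: "j < c" shows "matrix_unit i j \<noteq> zero_ga"
proof
  assume "matrix_unit i j = zero_ga"
  then have zero: "vs i \<star> u = zero_ga"
    using matrix_unit_mult[OF i j j i] matrix_unit_diag[OF i] by simp
  obtain n where n: "vs i n \<noteq> 0"
    using conj_v_eigen[OF hs_H[OF i]] unfolding vs_conj eigen_idempotent_def by auto
  then have nN: "n \<in> N" using vs_in_CN[OF i] unfolding ga_sub_def by blast
  obtain s where s: "u s \<noteq> 0" using u_eigen unfolding eigen_idempotent_def by auto
  then have sH: "s \<in> H\<alpha>" using u_eigen unfolding eigen_idempotent_def ga_sub_def by blast
  have "(vs i \<star> u) (n \<otimes> s) = vs i n * u s"
    using conv_apply_product[OF N_subgroup H\<alpha>_subgroup _ vs_in_CN[OF i] _ nN sH] N_inter_H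
      H\<alpha>_subset_H subgroup.one_closed[OF H\<alpha>_subgroup] u_eigen
    by (auto simp: eigen_idempotent_def)
  then show False using zero n s by simp
qed

text \<open>The linear map sending a matrix \<open>M\<close> to \<open>\<Sum> M\<^sub>i\<^sub>j E\<^sub>i\<^sub>j\<close>; its inverse is the required isomorphism.\<close>
definition block_of :: "complex mat \<Rightarrow> 'g \<Rightarrow> complex" where
  "block_of M = (\<lambda>x. \<Sum>i<c. \<Sum>j<c. M $$ (i, j) * matrix_unit i j x)"

lemma block_of_in_CG: "block_of M \<in> CG"
  unfolding ga_sub_def block_of_def matrix_unit_def by (simp add: conv_outside)

lemma block_of_add:
  "M \<in> carrier_mat c c \<Longrightarrow> M' \<in> carrier_mat c c \<Longrightarrow> block_of (M + M') = (\<lambda>x. block_of M x + block_of M' x)"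
  unfolding block_of_def by (simp add: sum.distrib distrib_right)

lemma block_of_smult: "M \<in> carrier_mat c c \<Longrightarrow> block_of (s \<cdot>\<^sub>m M) = (\<lambda>x. s * block_of M x)"
  unfolding block_of_def by (simp add: sum_distrib_left mult.assoc)

lemma block_of_elem_mat: assumes i: "i < c" and j: "j < c" shows "block_of (elem_mat c i j) = matrix_unit i j"
proof (rule ext)
  fix x
  have "block_of (elem_mat c i j) x = (\<Sum>k<c. \<Sum>l<c. if k = i \<and> l = j then matrix_unit k l x else 0)"
    unfolding block_of_def elem_mat_def by (intro sum.cong refl) auto
  also have "\<dots> = (\<Sum>k<c. if k = i then matrix_unit k j x else 0)"
    using j by (intro sum.cong refl) (simp add: if_distrib[symmetric])
  also have "\<dots> = matrix_unit i j x" using i by simp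
  finally show "block_of (elem_mat c i j) x = matrix_unit i j x" .
qed

lemma matrix_unit_mult_block:
  assumes i: "i < c" and j: "j < c"
  shows "matrix_unit i j \<star> block_of M = (\<lambda>x. \<Sum>l<c. M $$ (j, l) * matrix_unit i l x)"
proof -
  have "matrix_unit i j \<star> block_of M
      = (\<lambda>x. \<Sum>k<c. \<Sum>l<c. M $$ (k, l) * (matrix_unit i j \<star> matrix_unit k l) x)"
    unfolding block_of_def by (simp add: conv_sum_right conv_scale_right)
  also have "\<dots> = (\<lambda>x. \<Sum>k<c. if k = j then \<Sum>l<c. M $$ (j, l) * matrix_unit i l x else 0)"
    using i j by (intro ext sum.cong refl) (auto simp: matrix_unit_mult)
  finally show ?thesis using j by simp
qed

lemma block_mult_matrix_unit:
  assumes k: "k < c" and l: "l < c"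
  shows "block_of M \<star> matrix_unit k l = (\<lambda>x. \<Sum>i<c. M $$ (i, k) * matrix_unit i l x)"
proof -
  have "block_of M \<star> matrix_unit k l
      = (\<lambda>x. \<Sum>i<c. \<Sum>j<c. M $$ (i, j) * (matrix_unit i j \<star> matrix_unit k l) x)"
    unfolding block_of_def by (simp add: conv_sum_left conv_scale_left)
  also have "\<dots> = (\<lambda>x. \<Sum>i<c. \<Sum>j<c. if j = k then M $$ (i, k) * matrix_unit i l x else 0)"
    using k l by (intro ext sum.cong refl) (auto simp: matrix_unit_mult)
  finally show ?thesis using k by simp
qed

lemma block_of_mult:
  assumes M: "M \<in> carrier_mat c c" and M': "M' \<in> carrier_mat c c"
  shows "block_of M \<star> block_of M' = block_of (M * M')"
proof (rule ext)
  fix x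
  have "(block_of M \<star> block_of M') x
      = (\<Sum>i<c. \<Sum>j<c. M $$ (i, j) * (\<Sum>l<c. M' $$ (j, l) * matrix_unit i l x))"
    unfolding block_of_def[of M] conv_sum_left conv_scale_left
    by (intro sum.cong refl) (simp add: matrix_unit_mult_block)
  also have "\<dots> = (\<Sum>i<c. \<Sum>l<c. \<Sum>j<c. M $$ (i, j) * (M' $$ (j, l) * matrix_unit i l x))"
    by (rule sum.cong[OF refl]) (simp only: sum_distrib_left, rule sum.swap)
  also have "\<dots> = (\<Sum>i<c. \<Sum>l<c. (M * M') $$ (i, l) * matrix_unit i l x)"
    using M M'
    by (intro sum.cong refl) (simp add: scalar_prod_def lessThan_atLeast0 sum_distrib_right mult.assoc)
  finally show "(block_of M \<star> block_of M') x = block_of (M * M') x" unfolding block_of_def .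
qed

lemma block_of_inj: "inj_on block_of (carrier_mat c c)"
proof (rule inj_onI)
  fix M M' assume M: "M \<in> carrier_mat c c" and M': "M' \<in> carrier_mat c c" and eq: "block_of M = block_of M'"
  show "M = M'"
  proof (rule eq_matI)
    fix i j assume "i < dim_row M'" "j < dim_col M'"
    then have i: "i < c" and j: "j < c" using M' by auto
    have coeff: "(matrix_unit i i \<star> block_of P) \<star> matrix_unit j j = (\<lambda>x. P $$ (i, j) * matrix_unit i j x)" for P
    proof -
      have "(matrix_unit i i \<star> block_of P) \<star> matrix_unit j j
          = (\<lambda>x. \<Sum>l<c. P $$ (i, l) * (matrix_unit i l \<star> matrix_unit j j) x)"
        unfolding matrix_unit_mult_block[OF i i] by (rule conv_lincomb_left)
      also have "\<dots> = (\<lambda>x. \<Sum>l<c. if l = j then P $$ (i, j) * matrix_unit i j x else 0)"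
        using i j by (intro ext sum.cong refl) (auto simp: matrix_unit_mult)
      finally show ?thesis using j by simp
    qed
    obtain x where "matrix_unit i j x \<noteq> 0" using matrix_unit_nonzero[OF i j] by auto
    then show "M $$ (i, j) = M' $$ (i, j)" using fun_cong[OF coeff[of M]] fun_cong[OF coeff[of M']] eq
      by (metis mult_cancel_right)
  qed (use M M' in auto)
qed

lemma J_eq: "J = (\<lambda>x. \<Sum>k<c. matrix_unit k k x)"
  unfolding J_def w_def by (intro ext sum.cong refl) (simp add: matrix_unit_diag)

lemma block_of_mult_J: "block_of M \<star> J = block_of M"
proof (rule ext)
  fix x
  have "(block_of M \<star> J) x = (\<Sum>k<c. \<Sum>i<c. M $$ (i, k) * matrix_unit i k x)"
    unfolding J_eq conv_sum_right by (simp add: block_mult_matrix_unit)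
  also have "\<dots> = block_of M x" unfolding block_of_def by (rule sum.swap)
  finally show "(block_of M \<star> J) x = block_of M x" .
qed

lemma block_of_lincomb:
  assumes "finite I" "\<And>i. i \<in> I \<Longrightarrow> f i \<in> block_of ` carrier_mat c c"
  shows "(\<lambda>x. \<Sum>i\<in>I. s i * f i x) \<in> block_of ` carrier_mat c c"
  using assms
proof (induction I rule: finite_induct)
  case empty
  have "block_of (0\<^sub>m c c) = zero_ga" unfolding block_of_def by simp
  then show ?case by (intro image_eqI[where x="0\<^sub>m c c"]) auto
next
  case (insert a I)
  obtain M where M: "M \<in> carrier_mat c c" "f a = block_of M" using insert.prems by blast
  obtain M' where M': "M' \<in> carrier_mat c c" "(\<lambda>x. \<Sum>i\<in>I. s i * f i x) = block_of M'"
    using insert.IH insert.prems by blast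
  have "(\<lambda>x. \<Sum>i\<in>insert a I. s i * f i x) = block_of (s a \<cdot>\<^sub>m M + M')"
    using insert.hyps M M' fun_cong[OF M'(2)] by (simp add: block_of_add block_of_smult)
  then show ?case using M M' by auto
qed

text \<open>\<open>\<delta>\<^sub>g E\<^sub>k\<^sub>k\<close> is a multiple of some \<open>E\<^sub>m\<^sub>k\<close>: write \<open>g = n h\<close>, \<open>h = s h\<^sub>m h\<^sub>k\<^sup>-\<^sup>1\<close> with \<open>s \<in> H\<alpha>\<close>;
  then \<open>n\<close> acts on \<open>v\<^sub>m\<close> and \<open>s\<close> on \<open>u\<close> by scalars.\<close>
lemma delta_mult_diag_unit:
  assumes g: "g \<in> carrier G" and k: "k < c"
  obtains \<mu> m where "m < c" "\<delta> g \<star> matrix_unit k k = (\<lambda>x. \<mu> * matrix_unit m k x)"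
proof -
  obtain n h where n: "n \<in> N" and h: "h \<in> H" and gnh: "g = n \<otimes> h"
    using g N_times_H unfolding set_mult_def by blast
  obtain m where m: "m < c" "ga_conj G (h \<otimes> hs k) v = vs m" "(h \<otimes> hs k) \<otimes> inv (hs m) \<in> H\<alpha>"
    using coset_decomposition[OF H_mult[OF h hs_H[OF k]]] by blast
  define s where "s = (h \<otimes> hs k) \<otimes> inv (hs m)"
  let ?gm = "hs m \<otimes> inv (hs k)"
  have s: "s \<in> H\<alpha>" "s \<in> H" unfolding s_def using m(3) H\<alpha>_subset_H by auto
  have gm: "?gm \<in> H" by (rule hs_quotient_H[OF m(1) k])
  have "s \<otimes> ?gm = h"
    unfolding s_def using H_closed[OF h] hs_closed[OF k] hs_closed[OF m(1)] by (simp add: m_assoc)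
  moreover have "s \<otimes> ?gm = ?gm \<otimes> s" using H_comm s(2) gm by blast
  ultimately have "h = ?gm \<otimes> s" by simp
  then have Dh: "\<delta> h = \<delta> ?gm \<star> \<delta> s" using s(2) gm by (simp add: delta_delta H_closed)
  obtain \<mu>1 where \<mu>1: "\<delta> n \<star> vs m = (\<lambda>x. \<mu>1 * vs m x)"
    using conj_v_eigen[OF hs_H[OF m(1)]] n unfolding vs_conj eigen_idempotent_def by blast
  obtain \<mu>2 where \<mu>2: "\<delta> s \<star> u = (\<lambda>x. \<mu>2 * u x)"
    using u_eigen s(1) unfolding eigen_idempotent_def by blast
  have "\<delta> g \<star> matrix_unit k k = \<delta> n \<star> (\<delta> h \<star> (vs k \<star> u))"
    unfolding gnh matrix_unit_diag[OF k] by (rule delta_delta_conv[OF N_closed[OF n] H_closed[OF h], symmetric])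
  also have "\<dots> = \<delta> n \<star> (vs m \<star> (\<delta> h \<star> u))"
    using delta_conj_v_swap[OF h hs_H[OF k]] m(2) by (simp add: vs_conj conv_swap_left)
  also have "\<dots> = (\<lambda>x. \<mu>1 * (vs m \<star> (\<delta> h \<star> u)) x)"
    by (simp add: conv_assoc[symmetric] \<mu>1 conv_scale_left)
  also have "\<dots> = (\<lambda>x. (\<mu>1 * \<mu>2) * matrix_unit m k x)"
    unfolding Dh conv_assoc \<mu>2 matrix_unit_def by (simp add: conv_scale_right mult.assoc)
  finally show ?thesis using m(1) that by blast
qed

lemma block_of_image: "block_of ` carrier_mat c c = A"
proof
  show "block_of ` carrier_mat c c \<subseteq> A"
    unfolding A_def using block_of_mult_J block_of_in_CG by (auto intro!: exI[of _ "block_of _"])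
next
  show "A \<subseteq> block_of ` carrier_mat c c"
  proof
    fix y assume "y \<in> A"
    then obtain a where a: "a \<in> CG" "y = a \<star> J" unfolding A_def by blast
    have DJ: "\<delta> g \<star> J \<in> block_of ` carrier_mat c c" if g: "g \<in> carrier G" for g
    proof -
      have "\<delta> g \<star> J = (\<lambda>x. \<Sum>k<c. 1 * (\<delta> g \<star> matrix_unit k k) x)" unfolding J_eq by (simp add: conv_sum_right)
      also have "\<dots> \<in> block_of ` carrier_mat c c"
      proof (rule block_of_lincomb)
        fix k assume "k \<in> {..<c}"
        then obtain \<mu> m where m: "m < c" "\<delta> g \<star> matrix_unit k k = (\<lambda>x. \<mu> * matrix_unit m k x)"
          using delta_mult_diag_unit[OF g] by blast
        then have "\<delta> g \<star> matrix_unit k k = block_of (\<mu> \<cdot>\<^sub>m elem_mat c m k)"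
          using \<open>k \<in> {..<c}\<close> by (simp add: block_of_smult elem_mat_def block_of_elem_mat[unfolded elem_mat_def])
        then show "\<delta> g \<star> matrix_unit k k \<in> block_of ` carrier_mat c c"
          by (simp add: elem_mat_def)
      qed simp
      finally show ?thesis .
    qed
    have "y = (\<lambda>x. \<Sum>g\<in>carrier G. a g * (\<delta> g \<star> J) x)"
      unfolding a(2) by (subst delta_expansion[OF a(1) subset_refl]) (rule conv_lincomb_left)
    also have "\<dots> \<in> block_of ` carrier_mat c c" by (rule block_of_lincomb[OF finite_carrier DJ])
    finally show "y \<in> block_of ` carrier_mat c c" .
  qed
qed

lemma e_mult_chain: "i < c \<Longrightarrow> j < c \<Longrightarrow> k < c \<Longrightarrow> e i j \<star> e j k = e i k"
  by (simp add: e_eq_matrix_unit matrix_unit_mult)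

lemma e_mult_orthogonal: "i < c \<Longrightarrow> j < c \<Longrightarrow> k < c \<Longrightarrow> l < c \<Longrightarrow> j \<noteq> k \<Longrightarrow> e i j \<star> e k l = zero_ga"
  by (simp add: e_eq_matrix_unit matrix_unit_mult)

theorem block_isomorphism:
  "\<exists>\<phi>. bij_betw \<phi> A (carrier_mat c c)
     \<and> (\<forall>a\<in>A. \<forall>b\<in>A. \<phi> (\<lambda>x. a x + b x) = \<phi> a + \<phi> b)
     \<and> (\<forall>s. \<forall>a\<in>A. \<phi> (\<lambda>x. s * a x) = s \<cdot>\<^sub>m \<phi> a)
     \<and> (\<forall>a\<in>A. \<forall>b\<in>A. \<phi> (a \<star> b) = \<phi> a * \<phi> b)
     \<and> (\<forall>i<c. \<forall>j<c. e i j \<in> A \<and> \<phi> (e i j) = elem_mat c i j)"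
proof (intro exI conjI ballI allI impI)
  define \<phi> where "\<phi> = the_inv_into (carrier_mat c c) block_of"
  have inv: "\<phi> (block_of M) = M" if "M \<in> carrier_mat c c" for M
    unfolding \<phi>_def by (rule the_inv_into_f_f[OF block_of_inj that])
  have A: "a \<in> A \<longleftrightarrow> (\<exists>M\<in>carrier_mat c c. a = block_of M)" for a
    using block_of_image by blast
  show "bij_betw \<phi> A (carrier_mat c c)"
    unfolding \<phi>_def block_of_image[symmetric] by (rule bij_betw_the_inv_into[OF inj_on_imp_bij_betw[OF block_of_inj]])
  show "\<phi> (\<lambda>x. a x + b x) = \<phi> a + \<phi> b" "\<phi> (a \<star> b) = \<phi> a * \<phi> b" if "a \<in> A" "b \<in> A" for a b
    using that by (auto simp: A inv block_of_add[symmetric] block_of_mult)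
  show "\<phi> (\<lambda>x. s * a x) = s \<cdot>\<^sub>m \<phi> a" if "a \<in> A" for s a
    using that by (auto simp: A inv block_of_smult[symmetric])
  show "e i j \<in> A" "\<phi> (e i j) = elem_mat c i j" if "i < c" "j < c" for i j
    using that block_of_elem_mat[symmetric] e_eq_matrix_unit by (auto simp: A inv elem_mat_def)
qed

end

theorem mainTheorem11:
  fixes G :: "('g, 'b) monoid_scheme"
    and N H :: "'g set"
    and v u :: "'g \<Rightarrow> complex"
    and hs :: "nat \<Rightarrow> 'g"
  assumes grp: "group G"
    and fin: "finite (carrier G)"
    and normN: "N \<lhd> G"
    and subH: "subgroup H G"
    and abN: "\<forall>x\<in>N. \<forall>y\<in>N. x \<otimes>\<^bsub>G\<^esub> y = y \<otimes>\<^bsub>G\<^esub> x"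
    and abH: "\<forall>x\<in>H. \<forall>y\<in>H. x \<otimes>\<^bsub>G\<^esub> y = y \<otimes>\<^bsub>G\<^esub> x"
    and sd_int: "N \<inter> H = {\<one>\<^bsub>G\<^esub>}"
    and sd_gen: "N <#>\<^bsub>G\<^esub> H = carrier G"
    and v_in: "v \<in> idem_eigenbasis G N"
  defines "Orb \<equiv> {ga_conj G h v | h. h \<in> H}"
  defines "H\<alpha> \<equiv> {h \<in> H. \<forall>x\<in>Orb. ga_conj G h x = x}"
  defines "c \<equiv> card Orb"
  assumes u_in: "u \<in> idem_eigenbasis G H\<alpha>"
    and hs_in: "\<forall>i<c. hs i \<in> H"
    and hs_reps: "bij_betw (\<lambda>i. H\<alpha> #>\<^bsub>G\<^esub> hs i) {..<c} ((\<lambda>h. H\<alpha> #>\<^bsub>G\<^esub> h) ` H)"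
  defines "vs \<equiv> (\<lambda>i. ga_conj G (hs i) v)"
  defines "w \<equiv> (\<lambda>i. ga_mult G (vs i) u)"
  defines "e \<equiv> (\<lambda>i j. ga_mult G (ga_mult G (w i) (ga_delta G (hs i \<otimes>\<^bsub>G\<^esub> inv\<^bsub>G\<^esub> (hs j)))) (w j))"
  defines "J \<equiv> (\<lambda>x. \<Sum>i<c. w i x)"
  defines "A \<equiv> {ga_mult G a J | a. a \<in> ga_sub G (carrier G)}"
  shows "(\<forall>i<c. \<forall>j<c. \<forall>k<c. ga_mult G (e i j) (e j k) = e i k)
       \<and> (\<forall>i<c. \<forall>j<c. \<forall>k<c. \<forall>l<c. j \<noteq> k \<longrightarrow> ga_mult G (e i j) (e k l) = (\<lambda>x. 0))
       \<and> (\<exists>\<phi>. bij_betw \<phi> A (carrier_mat c c)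
             \<and> (\<forall>a\<in>A. \<forall>b\<in>A. \<phi> (\<lambda>x. a x + b x) = \<phi> a + \<phi> b)
             \<and> (\<forall>s. \<forall>a\<in>A. \<phi> (\<lambda>x. s * a x) = s \<cdot>\<^sub>m \<phi> a)
             \<and> (\<forall>a\<in>A. \<forall>b\<in>A. \<phi> (ga_mult G a b) = \<phi> a * \<phi> b)
             \<and> (\<forall>i<c. \<forall>j<c. e i j \<in> A \<and> \<phi> (e i j) = elem_mat c i j))"
proof -
  interpret orbit_block G N H v u hs Orb H\<alpha> c vs w e J A
    by (rule orbit_block.intro[OF group_algebra.intro[OF grp] orbit_block_axioms.intro])
       (fact | simp add: group_algebra_axioms_def fin
        | simp only: Orb_def H\<alpha>_def c_def vs_def w_def e_def J_def A_def)+
  show ?thesis using e_mult_chain e_mult_orthogonal block_isomorphism by blast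
qed

end
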